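(* In QED, for every $L\ge1$, $$W_L=\sum_{\Gamma^{\mathrm{el}}_L}\frac{1}{\mathrm{Sym}(\Gamma)}\,W(\Gamma),$$ the sum running over isomorphism classes of 1PI electron self-energy graphs with $L$ loops. Equivalently, $\sum_{\Gamma^{\mathrm{el}}_L}\frac{1}{\mathrm{Sym}(\Gamma)}\sum_{i}\Gamma(i)=\sum_{\Gamma^{\mathrm{v}}_L}\frac{1}{\mathrm{Sym}(\Gamma)}\Gamma$, the inner sum over internal electron edges $i$ of $\Gamma$.
   Context: QED Feynman graphs: one vertex type $\mathrm{v}$ (trivalent, one photon line and two electron lines) and two edge types, electron ($\mathrm{el}$) and photon ($\mathrm{ph}$); graphs have typed vertices/edges, incidence maps and labeled external lines; isomorphisms preserve types, incidence and external labels; $\mathrm{Sym}(\Gamma)=|\mathrm{Aut}(\Gamma)|$. A graph is 1PI if connected, not a tree, and still connected after removing any single edge; its residue is the vertex/edge type obtained by collapsing all internal edges; a 1PI graph with residue $\mathrm{el}$ (two external electron lines) is an electron self-energy graph, one with residue $\mathrm{v}$ a vertex graph; loop number = first Betti number. Working in the free commutative algebra $H$ on isomorphism classes of 1PI graphs, define for $L\ge1$: $W_L=\sum_{\Gamma^{\mathrm{v}}_L}\Gamma/\mathrm{Sym}(\Gamma)+\sum_{\Gamma^{\mathrm{el}}_L}\Gamma/\mathrm{Sym}(\Gamma)$ (sums over isomorphism classes of 1PI graphs with residue $\mathrm{v}$, resp. $\mathrm{el}$, and $L$ loops). For an electron self-energy graph $\Gamma$ and an internal electron edge $i$ of $\Gamma$,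 $\Gamma(i)$ is the vertex graph obtained by subdividing $i$ with a new vertex and attaching to it a new external photon line (with a fixed new label); the Ward–Takahashi element is $W(\Gamma)=\sum_i\Gamma(i)+\Gamma$, sum over all internal electron edges. *)

theory Defs
  imports Complex_Main "HOL-Library.Multiset" "HOL-Library.Poly_Mapping"
begin

datatype etype = El | Ph

text \<open>A QED graph: vertices and internal edges are named by naturals; each internal edge
  has a type and an (unordered) pair of end vertices, given as a 2-element multiset
  (so self-loops are representable); external lines are named by natural labels, each with
  a type and the vertex it is attached to.\<close>

record fgraph =
  V    :: "nat set"
  E    :: "nat set"
  ety  :: "nat \<Rightarrow> etype"
  ends :: "nat \<Rightarrow> nat multiset"
  X    :: "nat set"
  xty  :: "nat \<Rightarrow> etype"
  xv   :: "nat \<Rightarrow> nat"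

definition incid :: "fgraph \<Rightarrow> nat \<Rightarrow> etype \<Rightarrow> nat" where
  "incid G v t = (\<Sum>e\<in>{e\<in>E G. ety G e = t}. count (ends G e) v)
                 + card {l\<in>X G. xty G l = t \<and> xv G l = v}"

definition wf_graph :: "fgraph \<Rightarrow> bool" where
  "wf_graph G \<longleftrightarrow> finite (V G) \<and> finite (E G) \<and> finite (X G)
     \<and> (\<forall>e\<in>E G. size (ends G e) = 2 \<and> set_mset (ends G e) \<subseteq> V G)
     \<and> (\<forall>l\<in>X G. xv G l \<in> V G)
     \<and> (\<forall>v\<in>V G. incid G v El = 2 \<and> incid G v Ph = 1)"

definition adj :: "fgraph \<Rightarrow> (nat \<times> nat) set" where
  "adj G = {(u, w). \<exists>e\<in>E G. ends G e = {#u, w#}}"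

definition reach :: "fgraph \<Rightarrow> nat \<Rightarrow> nat \<Rightarrow> bool" where
  "reach G u w \<longleftrightarrow> (u, w) \<in> ((adj G) \<union> (adj G)\<inverse>)\<^sup>*"

definition connected_graph :: "fgraph \<Rightarrow> bool" where
  "connected_graph G \<longleftrightarrow> V G \<noteq> {} \<and> (\<forall>u\<in>V G. \<forall>w\<in>V G. reach G u w)"

definition ncomponents :: "fgraph \<Rightarrow> nat" where
  "ncomponents G = card {C. \<exists>v\<in>V G. C = {w\<in>V G. reach G v w}}"

definition loops :: "fgraph \<Rightarrow> int" where
  "loops G = int (card (E G)) - int (card (V G)) + int (ncomponents G)"

definition is_tree :: "fgraph \<Rightarrow> bool" where
  "is_tree G \<longleftrightarrow> connected_graph G \<and> loops G = 0"

definition delete_edge :: "fgraph \<Rightarrow> nat \<Rightarrow> fgraph" where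
  "delete_edge G e = G\<lparr>E := E G - {e}\<rparr>"

definition onePI :: "fgraph \<Rightarrow> bool" where
  "onePI G \<longleftrightarrow> connected_graph G \<and> \<not> is_tree G
     \<and> (\<forall>e\<in>E G. connected_graph (delete_edge G e))"

text \<open>Residues, with the convention that the external lines of the residue carry fixed labels:
  electron lines 0 and 1, photon line 2.\<close>
definition residue_el :: "fgraph \<Rightarrow> bool" where
  "residue_el G \<longleftrightarrow> X G = {0, 1} \<and> xty G 0 = El \<and> xty G 1 = El"

definition residue_v :: "fgraph \<Rightarrow> bool" where
  "residue_v G \<longleftrightarrow> X G = {0, 1, 2} \<and> xty G 0 = El \<and> xty G 1 = El \<and> xty G 2 = Ph"

definition graph_morph :: "fgraph \<Rightarrow> fgraph \<Rightarrow> (nat \<Rightarrow> nat) \<Rightarrow> (nat \<Rightarrow> nat) \<Rightarrow> bool" where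
  "graph_morph G H f g \<longleftrightarrow> bij_betw f (V G) (V H) \<and> bij_betw g (E G) (E H)
     \<and> (\<forall>e\<in>E G. ety H (g e) = ety G e \<and> ends H (g e) = image_mset f (ends G e))
     \<and> X H = X G \<and> (\<forall>l\<in>X G. xty H l = xty G l \<and> xv H l = f (xv G l))"

definition graph_iso :: "fgraph \<Rightarrow> fgraph \<Rightarrow> bool" where
  "graph_iso G H \<longleftrightarrow> (\<exists>f g. graph_morph G H f g)"

definition Aut :: "fgraph \<Rightarrow> ((nat \<Rightarrow> nat) \<times> (nat \<Rightarrow> nat)) set" where
  "Aut G = {(f, g). graph_morph G G f g \<and> (\<forall>x. x \<notin> V G \<longrightarrow> f x = x)
                                        \<and> (\<forall>e. e \<notin> E G \<longrightarrow> g e = e)}"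

definition Sym :: "fgraph \<Rightarrow> nat" where
  "Sym G = card (Aut G)"

definition iso_class :: "fgraph \<Rightarrow> fgraph set" where
  "iso_class G = {H. wf_graph H \<and> graph_iso G H}"

definition rep :: "fgraph set \<Rightarrow> fgraph" where
  "rep c = (SOME G. G \<in> c)"

text \<open>Free commutative Q-algebra on isomorphism classes (monoid algebra of the free commutative
  monoid (class \<Rightarrow>0 nat)).\<close>
type_synonym halg = "(fgraph set \<Rightarrow>\<^sub>0 nat) \<Rightarrow>\<^sub>0 rat"

definition gen :: "fgraph \<Rightarrow> halg" where
  "gen G = Poly_Mapping.single (Poly_Mapping.single (iso_class G) 1) 1"

definition hscale :: "rat \<Rightarrow> halg \<Rightarrow> halg" where
  "hscale r p = Poly_Mapping.single 0 r * p"

definition el_classes :: "nat \<Rightarrow> fgraph set set" where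
  "el_classes L = {iso_class G | G. wf_graph G \<and> onePI G \<and> residue_el G \<and> loops G = int L}"

definition v_classes :: "nat \<Rightarrow> fgraph set set" where
  "v_classes L = {iso_class G | G. wf_graph G \<and> onePI G \<and> residue_v G \<and> loops G = int L}"

definition W_L :: "nat \<Rightarrow> halg" where
  "W_L L = (\<Sum>c\<in>v_classes L. hscale (1 / of_nat (Sym (rep c))) (gen (rep c)))
         + (\<Sum>c\<in>el_classes L. hscale (1 / of_nat (Sym (rep c))) (gen (rep c)))"

definition fresh :: "nat set \<Rightarrow> nat" where
  "fresh A = Suc (Max (insert 0 A))"

text \<open>Subdivide internal edge i by a new vertex w and attach to w a new external photon line
  with label 2.\<close>
definition insert_photon :: "fgraph \<Rightarrow> nat \<Rightarrow> fgraph" where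
  "insert_photon G i =
    (let w = fresh (V G); e' = fresh (E G); a = (SOME a. a \<in># ends G i);
         b = ends G i - {#a#} in
     G\<lparr> V := insert w (V G),
        E := insert e' (E G),
        ety := (ety G)(e' := El),
        ends := (ends G)(i := {#a, w#}, e' := add_mset w b),
        X := insert 2 (X G),
        xty := (xty G)(2 := Ph),
        xv := (xv G)(2 := w) \<rparr>)"

definition el_edges :: "fgraph \<Rightarrow> nat set" where
  "el_edges G = {e\<in>E G. ety G e = El}"

definition WT :: "fgraph \<Rightarrow> halg" where
  "WT G = (\<Sum>i\<in>el_edges G. gen (insert_photon G i)) + gen G"

end

theory Submission
  imports Defs "HOL-Library.FuncSet"
begin

(*
  Contracting the photon vertex of a 1PI vertex graph D gives a 1PI electron self-energy graph C
  with a marked electron edge e1 such that D = C(e1): by the incidence rules and the absence of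
  bridges, the photon vertex carries exactly two edge ends, on two electron edges leading to two
  distinct neighbours.  For a self-energy graph G, restricting along the subdivided edge
  identifies the pairs (j, phi) of an electron edge j of G and an isomorphism phi : G(j) -> D with
  the isomorphisms G -> C.  Hence the set O of electron edges j with G(j) isomorphic to D satisfies
  |O| Sym(D) = Sym(G) if G is isomorphic to C, and O is empty otherwise.  On the left-hand side the
  vertex class of D therefore receives the total weight |O| / Sym(C) = 1 / Sym(D).
*)

lemma size_2_msetE:
  assumes "size M = 2" "x \<in># M"
  obtains y where "M = {#x, y#}"
proof -
  obtain A where A: "M = add_mset x A" using multi_member_split[OF assms(2)] by blast
  then obtain y where "A = {#y#}" using assms(1) size_1_singleton_mset by force
  then show ?thesis using that A by blast
qed

lemma size_2_mset_count_1E: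
  assumes "size M = 2" "count M x = 1"
  obtains y where "M = {#x, y#}" "y \<noteq> x"
proof -
  have "x \<in># M" using assms(2) by (simp add: count_inI)
  then obtain y where "M = {#x, y#}" using assms(1) size_2_msetE by metis
  moreover have "y \<noteq> x" using assms(2) calculation by auto
  ultimately show thesis using that by blast
qed

lemma size_2_mset_count_2: "size M = 2 \<Longrightarrow> count M x = 2 \<Longrightarrow> M = {#x, x#}"
proof -
  assume "size M = 2" "count M x = 2"
  moreover have "x \<in># M" using \<open>count M x = 2\<close> by (simp add: count_inI)
  ultimately obtain y where "M = {#x, y#}" using size_2_msetE by metis
  then show "M = {#x, x#}" using \<open>count M x = 2\<close> by (cases "y = x") auto
qed

lemma mset_doubleton_eq_iff: "{#x, y#} = {#a, b#} \<longleftrightarrow> (x = a \<and> y = b) \<or> (x = b \<and> y = a)"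
  by (auto simp: add_eq_conv_diff)

lemma card_le_sum_count: "card {e\<in>A. x \<in># M e} \<le> (\<Sum>e\<in>{e\<in>A. x \<in># M e}. count (M e) x)"
proof -
  have "(\<Sum>e\<in>{e\<in>A. x \<in># M e}. 1) \<le> (\<Sum>e\<in>{e\<in>A. x \<in># M e}. count (M e) x)"
    by (rule sum_mono) (simp add: Suc_le_eq)
  then show ?thesis by simp
qed

section \<open>Connectivity\<close>

lemma wf_graphD:
  assumes "wf_graph G"
  shows "finite (V G)" "finite (E G)" "finite (X G)"
    "\<And>e. e \<in> E G \<Longrightarrow> size (ends G e) = 2" "\<And>e. e \<in> E G \<Longrightarrow> set_mset (ends G e) \<subseteq> V G"
    "\<And>l. l \<in> X G \<Longrightarrow> xv G l \<in> V G"
    "\<And>v. v \<in> V G \<Longrightarrow> incid G v El = 2" "\<And>v. v \<in> V G \<Longrightarrow> incid G v Ph = 1"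
  using assms unfolding wf_graph_def by auto

lemma adj_iff: "(x, y) \<in> adj G \<longleftrightarrow> (\<exists>e\<in>E G. ends G e = {#x, y#})"
  by (simp add: adj_def)

lemma reach_refl [simp]: "reach G u u"
  by (simp add: reach_def)

lemma reach_sym: "reach G u v \<Longrightarrow> reach G v u"
proof -
  let ?R = "adj G \<union> (adj G)\<inverse>"
  assume "reach G u v"
  then have "(v, u) \<in> (?R\<inverse>)\<^sup>*" unfolding reach_def by (simp add: rtrancl_converseI)
  moreover have "?R\<inverse> = ?R" by auto
  ultimately show ?thesis unfolding reach_def by simp
qed

lemma reach_trans: "reach G u v \<Longrightarrow> reach G v w \<Longrightarrow> reach G u w"
  unfolding reach_def by (rule rtrancl_trans)

lemma reach_adj: "(u, v) \<in> adj G \<Longrightarrow> reach G u v"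
  unfolding reach_def by auto

lemma reach_edge: "e \<in> E G \<Longrightarrow> ends G e = {#u, v#} \<Longrightarrow> reach G u v"
  by (rule reach_adj) (auto simp: adj_iff)

lemma reach_map:
  assumes "\<And>x y. (x, y) \<in> adj G \<Longrightarrow> reach H (f x) (f y)" and "reach G u v"
  shows "reach H (f u) (f v)"
  using assms(2) unfolding reach_def[of G]
proof (induction rule: rtrancl_induct)
  case (step y z)
  then have "reach H (f y) (f z)" using assms(1) reach_sym by blast
  then show ?case using step.IH reach_trans by blast
qed simp

lemma connected_graphD: "connected_graph G \<Longrightarrow> u \<in> V G \<Longrightarrow> v \<in> V G \<Longrightarrow> reach G u v"
  by (simp add: connected_graph_def)

lemma connected_graph_closed_set:
  assumes "connected_graph G"
    and closed: "\<And>e. e \<in> E G \<Longrightarrow> set_mset (ends G e) \<inter> S \<noteq> {} \<Longrightarrow> set_mset (ends G e) \<subseteq> S"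
    and "u \<in> S" "u \<in> V G" "v \<in> V G"
  shows "v \<in> S"
proof -
  have "reach G u v" using assms by (simp add: connected_graphD)
  then show ?thesis using \<open>u \<in> S\<close> unfolding reach_def
  proof (induction rule: rtrancl_induct)
    case (step y z)
    then obtain e where "e \<in> E G" "ends G e = {#y, z#} \<or> ends G e = {#z, y#}"
      by (auto simp: adj_iff)
    then show ?case using closed step.IH step.prems by fastforce
  qed
qed

lemma connected_graph_map:
  assumes "connected_graph G" and "\<And>x y. (x, y) \<in> adj G \<Longrightarrow> reach H (f x) (f y)"
    and "V H \<noteq> {}" and "\<And>u. u \<in> V H \<Longrightarrow> \<exists>u'\<in>V G. reach H (f u') u"
  shows "connected_graph H"
  unfolding connected_graph_def
proof (intro conjI ballI)
  fix u v assume "u \<in> V H" "v \<in> V H"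
  then obtain u' v' where "u' \<in> V G" "reach H (f u') u" "v' \<in> V G" "reach H (f v') v"
    using assms(4) by meson
  moreover have "reach H (f u') (f v')"
    using reach_map[of G H f, OF assms(2)] assms(1) \<open>u' \<in> V G\<close> \<open>v' \<in> V G\<close>
    by (simp add: connected_graphD)
  ultimately show "reach H u v" using reach_sym reach_trans by blast
qed (rule assms(3))

lemma ncomponents_connected: "connected_graph G \<Longrightarrow> ncomponents G = 1"
proof -
  assume "connected_graph G"
  then have "{C. \<exists>v\<in>V G. C = {w\<in>V G. reach G v w}} = {V G}"
    unfolding connected_graph_def by auto
  then show ?thesis unfolding ncomponents_def by simp
qed

lemma loops_connected:
  "connected_graph G \<Longrightarrow> loops G = int (card (E G)) - int (card (V G)) + 1"
  by (simp add: loops_def ncomponents_connected)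

lemma V_delete_edge [simp]: "V (delete_edge G e) = V G"
  and E_delete_edge [simp]: "E (delete_edge G e) = E G - {e}"
  and ends_delete_edge [simp]: "ends (delete_edge G e) = ends G"
  by (simp_all add: delete_edge_def)

lemma delete_edge_notin: "e \<notin> E G \<Longrightarrow> delete_edge G e = G"
proof -
  assume "e \<notin> E G"
  then have "E G - {e} = E G" by auto
  then show ?thesis by (simp add: delete_edge_def)
qed

lemma onePI_delete_edge_closed_set:
  assumes "onePI G" "e \<in> E G"
    and "\<And>e'. e' \<in> E G \<Longrightarrow> e' \<noteq> e \<Longrightarrow> set_mset (ends G e') \<inter> S \<noteq> {} \<Longrightarrow> set_mset (ends G e') \<subseteq> S"
    and "u \<in> S" "u \<in> V G" "v \<in> V G"
  shows "v \<in> S"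
proof -
  have "connected_graph (delete_edge G e)" using assms(1,2) by (simp add: onePI_def)
  then show ?thesis by (rule connected_graph_closed_set) (use assms(3-) in auto)
qed

lemma onePI_edges_nonempty:
  assumes "onePI G"
  shows "E G \<noteq> {}"
proof
  assume E: "E G = {}"
  have c: "connected_graph G" using assms by (simp add: onePI_def)
  then obtain u where u: "u \<in> V G" by (auto simp: connected_graph_def)
  have "V G \<subseteq> {u}"
    using connected_graph_closed_set[OF c _ _ u] E by auto
  then have "V G = {u}" using u by auto
  then have "loops G = 0" using loops_connected[OF c] E by simp
  then show False using assms c by (simp add: onePI_def is_tree_def)
qed

lemma onePI_vertex_has_edge:
  assumes wf: "wf_graph G" and p: "onePI G" and v: "v \<in> V G"
  shows "\<exists>e\<in>E G. v \<in># ends G e"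
proof (rule ccontr)
  assume none: "\<not> (\<exists>e\<in>E G. v \<in># ends G e)"
  obtain e where e: "e \<in> E G" using onePI_edges_nonempty[OF p] by blast
  have "ends G e \<noteq> {#}" using wf_graphD(4)[OF wf e] by auto
  then obtain x where x: "x \<in># ends G e" by blast
  have "x \<in> {v}"
  proof (rule connected_graph_closed_set[OF _ _ _ v])
    show "connected_graph G" using p by (simp add: onePI_def)
    show "x \<in> V G" using wf_graphD(5)[OF wf e] x by auto
  qed (use none in auto)
  then show False using none e x by auto
qed

lemma onePI_no_pendant_edge:
  assumes wf: "wf_graph G" and p: "onePI G" and e: "e \<in> E G" "ends G e = {#v, u#}" "u \<noteq> v"
  shows "\<exists>e'\<in>E G. e' \<noteq> e \<and> v \<in># ends G e'"
proof (rule ccontr)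
  assume none: "\<not> (\<exists>e'\<in>E G. e' \<noteq> e \<and> v \<in># ends G e')"
  have "u \<in> {v}"
  proof (rule onePI_delete_edge_closed_set[OF p e(1)])
    show "v \<in> V G" "u \<in> V G" using wf_graphD(5)[OF wf e(1)] e(2) by auto
  qed (use none in auto)
  then show False using e(3) by simp
qed

section \<open>Morphisms and isomorphism classes\<close>

lemma graph_morphD:
  assumes "graph_morph G H f g"
  shows "bij_betw f (V G) (V H)" "bij_betw g (E G) (E H)"
    "\<And>e. e \<in> E G \<Longrightarrow> ety H (g e) = ety G e"
    "\<And>e. e \<in> E G \<Longrightarrow> ends H (g e) = image_mset f (ends G e)"
    "X H = X G" "\<And>l. l \<in> X G \<Longrightarrow> xty H l = xty G l"
    "\<And>l. l \<in> X G \<Longrightarrow> xv H l = f (xv G l)"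
  using assms by (auto simp: graph_morph_def)

lemma graph_morph_id: "graph_morph G G id id"
  by (simp add: graph_morph_def)

lemma graph_morph_comp:
  assumes "graph_morph G H f g" "graph_morph H K f' g'"
  shows "graph_morph G K (f' \<circ> f) (g' \<circ> g)"
proof -
  have "\<And>e. e \<in> E G \<Longrightarrow> g e \<in> E H"
    using graph_morphD(2)[OF assms(1)] by (auto simp: bij_betw_def)
  then show ?thesis using assms unfolding graph_morph_def
    by (auto simp: bij_betw_trans multiset.map_comp)
qed

lemma graph_morph_cong:
  assumes "wf_graph G" "graph_morph G H f g"
    "\<And>x. x \<in> V G \<Longrightarrow> f x = f' x" "\<And>e. e \<in> E G \<Longrightarrow> g e = g' e"
  shows "graph_morph G H f' g'"
proof -
  have "image_mset f (ends G e) = image_mset f' (ends G e)" if "e \<in> E G" for e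
    using wf_graphD(5)[OF assms(1) that] assms(3) by (intro multiset.map_cong0) auto
  then show ?thesis using assms(2-4) wf_graphD(6)[OF assms(1)]
      bij_betw_cong[of "V G" f f' "V H"] bij_betw_cong[of "E G" g g' "E H"]
    unfolding graph_morph_def by (metis (no_types, lifting))
qed

lemma graph_morph_inv:
  assumes wf: "wf_graph G" and m: "graph_morph G H f g"
  shows "graph_morph H G (inv_into (V G) f) (inv_into (E G) g)"
proof -
  have bf: "bij_betw f (V G) (V H)" and bg: "bij_betw g (E G) (E H)"
    using graph_morphD(1,2)[OF m] by auto
  have edge: "ety G (inv_into (E G) g e') = ety H e' \<and>
      ends G (inv_into (E G) g e') = image_mset (inv_into (V G) f) (ends H e')"
    if e': "e' \<in> E H" for e'
  proof -
    obtain e where e: "e \<in> E G" "e' = g e" using e' bg by (auto simp: bij_betw_def)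
    have "image_mset (inv_into (V G) f) (ends H e') = image_mset (inv_into (V G) f \<circ> f) (ends G e)"
      using m e by (simp add: graph_morph_def multiset.map_comp)
    also have "\<dots> = image_mset id (ends G e)"
      using wf_graphD(5)[OF wf e(1)] bf by (intro multiset.map_cong0) (auto simp: bij_betw_def)
    finally show ?thesis using m e bg by (simp add: graph_morph_def bij_betw_def)
  qed
  have "xv G l = inv_into (V G) f (xv H l)" if "l \<in> X G" for l
    using m wf_graphD(6)[OF wf that] bf that by (simp add: graph_morph_def bij_betw_def)
  then show ?thesis using bij_betw_inv_into[OF bf] bij_betw_inv_into[OF bg] edge m
    unfolding graph_morph_def by auto
qed

lemma graph_iso_refl: "graph_iso G G"
  using graph_morph_id unfolding graph_iso_def by blast

lemma graph_iso_sym: "wf_graph G \<Longrightarrow> graph_iso G H \<Longrightarrow> graph_iso H G"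
  unfolding graph_iso_def using graph_morph_inv by blast

lemma graph_iso_trans: "graph_iso G H \<Longrightarrow> graph_iso H K \<Longrightarrow> graph_iso G K"
  unfolding graph_iso_def using graph_morph_comp by blast

lemma iso_class_eq_iff:
  assumes "wf_graph G" "wf_graph H"
  shows "iso_class G = iso_class H \<longleftrightarrow> graph_iso G H"
proof
  assume "iso_class G = iso_class H"
  moreover have "H \<in> iso_class H" using assms graph_iso_refl by (simp add: iso_class_def)
  ultimately show "graph_iso G H" unfolding iso_class_def by blast
next
  assume GH: "graph_iso G H"
  then have "graph_iso H G" using assms(1) graph_iso_sym by blast
  then show "iso_class G = iso_class H"
    unfolding iso_class_def using GH graph_iso_trans by blast
qed

lemma rep_iso_class:
  assumes "wf_graph G"
  shows "wf_graph (rep (iso_class G))" "graph_iso G (rep (iso_class G))"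
proof -
  have "G \<in> iso_class G" using assms graph_iso_refl by (simp add: iso_class_def)
  then have "rep (iso_class G) \<in> iso_class G" unfolding rep_def by (rule someI)
  then show "wf_graph (rep (iso_class G))" "graph_iso G (rep (iso_class G))"
    by (simp_all add: iso_class_def)
qed

lemma iso_class_rep: "wf_graph G \<Longrightarrow> iso_class (rep (iso_class G)) = iso_class G"
  using iso_class_eq_iff rep_iso_class by metis

lemma gen_rep_iso_class: "wf_graph G \<Longrightarrow> gen (rep (iso_class G)) = gen G"
  by (simp add: gen_def iso_class_rep)

lemma graph_morph_connected:
  assumes m: "graph_morph G H f g" and c: "connected_graph G"
  shows "connected_graph H"
proof (rule connected_graph_map[OF c])
  have bf: "bij_betw f (V G) (V H)" using graph_morphD(1)[OF m] .
  show "reach H (f x) (f y)" if xy: "(x, y) \<in> adj G" for x y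
  proof -
    obtain e where "e \<in> E G" "ends G e = {#x, y#}" using xy by (auto simp: adj_iff)
    then have "g e \<in> E H" "ends H (g e) = {#f x, f y#}"
      using m by (auto simp: graph_morph_def bij_betw_def)
    then show ?thesis by (rule reach_edge)
  qed
  show "V H \<noteq> {}" using c bf by (auto simp: connected_graph_def bij_betw_def)
  show "\<exists>u'\<in>V G. reach H (f u') u" if "u \<in> V H" for u
  proof -
    obtain u' where "u' \<in> V G" "u = f u'" using \<open>u \<in> V H\<close> bf by (auto simp: bij_betw_def)
    then show ?thesis using reach_refl by blast
  qed
qed

lemma graph_morph_delete_edge:
  assumes m: "graph_morph G H f g" and e: "e \<in> E G"
  shows "graph_morph (delete_edge G e) (delete_edge H (g e)) f g"
proof -
  have "bij_betw g (E G - {e}) (E H - {g e})"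
    using graph_morphD(2)[OF m] e by (intro bij_betw_DiffI) (auto simp: bij_betw_def)
  then show ?thesis using m by (simp add: graph_morph_def delete_edge_def)
qed

lemma graph_morph_loops:
  assumes m: "graph_morph G H f g" and c: "connected_graph G"
  shows "loops H = loops G"
proof -
  have "card (V G) = card (V H)" "card (E G) = card (E H)"
    using graph_morphD(1,2)[OF m] by (auto intro: bij_betw_same_card)
  then show ?thesis using loops_connected c graph_morph_connected[OF m c] by simp
qed

lemma graph_morph_onePI:
  assumes m: "graph_morph G H f g" and p: "onePI G"
  shows "onePI H"
  unfolding onePI_def
proof (intro conjI ballI)
  have c: "connected_graph G" using p by (simp add: onePI_def)
  show "connected_graph H" using graph_morph_connected[OF m c] .
  show "\<not> is_tree H"
    using p graph_morph_loops[OF m c] by (simp add: onePI_def is_tree_def)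
  fix e' assume "e' \<in> E H"
  then obtain e where e: "e \<in> E G" "e' = g e"
    using graph_morphD(2)[OF m] by (auto simp: bij_betw_def)
  have "connected_graph (delete_edge G e)" using p e(1) by (simp add: onePI_def)
  then show "connected_graph (delete_edge H e')"
    unfolding e(2) by (rule graph_morph_connected[OF graph_morph_delete_edge[OF m e(1)]])
qed

lemma graph_iso_onePI_loops:
  assumes "graph_iso G H" "onePI G"
  shows "onePI H" "loops H = loops G"
proof -
  obtain f g where m: "graph_morph G H f g" using assms(1) by (auto simp: graph_iso_def)
  show "onePI H" using graph_morph_onePI[OF m assms(2)] .
  show "loops H = loops G" using graph_morph_loops[OF m] assms(2) by (simp add: onePI_def)
qed

lemma graph_iso_residue:
  assumes "graph_iso G H"
  shows "residue_el G \<Longrightarrow> residue_el H" "residue_v G \<Longrightarrow> residue_v H"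
proof -
  have X: "X H = X G" and xty: "\<And>l. l \<in> X G \<Longrightarrow> xty H l = xty G l"
    using assms by (auto simp: graph_iso_def graph_morph_def)
  show "residue_el G \<Longrightarrow> residue_el H" using X xty[of 0] xty[of 1] by (simp add: residue_el_def)
  show "residue_v G \<Longrightarrow> residue_v H"
    using X xty[of 0] xty[of 1] xty[of 2] by (simp add: residue_v_def)
qed

section \<open>Counting isomorphisms\<close>

definition fix_outside :: "nat set \<Rightarrow> (nat \<Rightarrow> nat) \<Rightarrow> nat \<Rightarrow> nat" where
  "fix_outside A h = (\<lambda>x. if x \<in> A then h x else x)"

definition isos :: "fgraph \<Rightarrow> fgraph \<Rightarrow> ((nat \<Rightarrow> nat) \<times> (nat \<Rightarrow> nat)) set" where
  "isos G H = {(f, g). graph_morph G H f g \<and> (\<forall>x. x \<notin> V G \<longrightarrow> f x = x)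
                                        \<and> (\<forall>e. e \<notin> E G \<longrightarrow> g e = e)}"

lemma Sym_eq_card_isos: "Sym G = card (isos G G)"
  by (simp add: Sym_def Aut_def isos_def)

lemma isosD:
  "(f, g) \<in> isos G H \<Longrightarrow> graph_morph G H f g"
  "(f, g) \<in> isos G H \<Longrightarrow> x \<notin> V G \<Longrightarrow> f x = x"
  "(f, g) \<in> isos G H \<Longrightarrow> e \<notin> E G \<Longrightarrow> g e = e"
  by (auto simp: isos_def)

lemma fix_outside_in_isos:
  assumes "wf_graph G" "graph_morph G H f g"
  shows "(fix_outside (V G) f, fix_outside (E G) g) \<in> isos G H"
  using graph_morph_cong[OF assms, of "fix_outside (V G) f" "fix_outside (E G) g"]
  by (auto simp: isos_def fix_outside_def)

lemma isos_nonempty_iff: "wf_graph G \<Longrightarrow> isos G H \<noteq> {} \<longleftrightarrow> graph_iso G H"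
  using fix_outside_in_isos isosD(1) unfolding graph_iso_def by fast

lemma fix_outside_precomp_inv:
  assumes "bij_betw f A B" "\<And>x. x \<notin> B \<Longrightarrow> h x = x"
  shows "fix_outside B (fix_outside A (h \<circ> f) \<circ> inv_into A f) = h"
  using assms by (auto simp: fix_outside_def fun_eq_iff bij_betw_def f_inv_into_f inv_into_into)

lemma fix_outside_precomp:
  assumes "bij_betw f A B" "\<And>x. x \<notin> A \<Longrightarrow> h x = x"
  shows "fix_outside A (fix_outside B (h \<circ> inv_into A f) \<circ> f) = h"
  using assms by (auto simp: fix_outside_def fun_eq_iff bij_betw_def)

lemma card_isos_precomp:
  assumes wfG: "wf_graph G" and wfH: "wf_graph H" and m: "graph_morph G H f g"
  shows "card (isos H K) = card (isos G K)"
proof -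
  let ?fi = "inv_into (V G) f" and ?gi = "inv_into (E G) g"
  define \<phi> where "\<phi> = (\<lambda>(f', g'). (fix_outside (V G) (f' \<circ> f), fix_outside (E G) (g' \<circ> g)))"
  define \<psi> where "\<psi> = (\<lambda>(f', g'). (fix_outside (V H) (f' \<circ> ?fi), fix_outside (E H) (g' \<circ> ?gi)))"
  have bf: "bij_betw f (V G) (V H)" and bg: "bij_betw g (E G) (E H)"
    using graph_morphD(1,2)[OF m] by auto
  have mi: "graph_morph H G ?fi ?gi" using graph_morph_inv[OF wfG m] .
  have "bij_betw \<phi> (isos H K) (isos G K)"
  proof (rule bij_betw_byWitness[where f' = \<psi>])
    show "\<forall>a\<in>isos H K. \<psi> (\<phi> a) = a"
    proof clarify
      fix f' g' assume "(f', g') \<in> isos H K"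
      then show "\<psi> (\<phi> (f', g')) = (f', g')"
        using fix_outside_precomp_inv[OF bf, of f'] fix_outside_precomp_inv[OF bg, of g'] isosD(2,3)
        by (simp add: \<phi>_def \<psi>_def)
    qed
    show "\<forall>a\<in>isos G K. \<phi> (\<psi> a) = a"
    proof clarify
      fix f' g' assume "(f', g') \<in> isos G K"
      then show "\<phi> (\<psi> (f', g')) = (f', g')"
        using fix_outside_precomp[OF bf, of f'] fix_outside_precomp[OF bg, of g'] isosD(2,3)
        by (simp add: \<phi>_def \<psi>_def)
    qed
    show "\<phi> ` isos H K \<subseteq> isos G K"
      using fix_outside_in_isos[OF wfG graph_morph_comp[OF m isosD(1)]] by (auto simp: \<phi>_def)
    show "\<psi> ` isos G K \<subseteq> isos H K"
      using fix_outside_in_isos[OF wfH graph_morph_comp[OF mi isosD(1)]] by (auto simp: \<psi>_def)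
  qed
  then show ?thesis by (rule bij_betw_same_card)
qed

lemma fix_outside_postcomp_inv:
  assumes "bij_betw f B C" "h ` A \<subseteq> B" "\<And>x. x \<notin> A \<Longrightarrow> h x = x"
  shows "fix_outside A (inv_into B f \<circ> fix_outside A (f \<circ> h)) = h"
  using assms by (auto simp: fix_outside_def fun_eq_iff bij_betw_def)

lemma fix_outside_postcomp:
  assumes "bij_betw f B C" "h ` A \<subseteq> C" "\<And>x. x \<notin> A \<Longrightarrow> h x = x"
  shows "fix_outside A (f \<circ> fix_outside A (inv_into B f \<circ> h)) = h"
  using assms by (auto simp: fix_outside_def fun_eq_iff bij_betw_def f_inv_into_f)

lemma card_isos_postcomp:
  assumes wfG: "wf_graph G" and wfH: "wf_graph H" and m: "graph_morph H K f g"
  shows "card (isos G H) = card (isos G K)"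
proof -
  let ?fi = "inv_into (V H) f" and ?gi = "inv_into (E H) g"
  define \<phi> where "\<phi> = (\<lambda>(f', g'). (fix_outside (V G) (f \<circ> f'), fix_outside (E G) (g \<circ> g')))"
  define \<psi> where "\<psi> = (\<lambda>(f', g'). (fix_outside (V G) (?fi \<circ> f'), fix_outside (E G) (?gi \<circ> g')))"
  have bf: "bij_betw f (V H) (V K)" and bg: "bij_betw g (E H) (E K)"
    using graph_morphD(1,2)[OF m] by auto
  have mi: "graph_morph K H ?fi ?gi" using graph_morph_inv[OF wfH m] .
  have "bij_betw \<phi> (isos G H) (isos G K)"
  proof (rule bij_betw_byWitness[where f' = \<psi>])
    show "\<forall>a\<in>isos G H. \<psi> (\<phi> a) = a"
    proof clarify
      fix f' g' assume a: "(f', g') \<in> isos G H"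
      have "f' ` V G \<subseteq> V H" "g' ` E G \<subseteq> E H"
        using graph_morphD(1,2)[OF isosD(1)[OF a]] by (auto simp: bij_betw_def)
      then show "\<psi> (\<phi> (f', g')) = (f', g')"
        using fix_outside_postcomp_inv[OF bf, of f'] fix_outside_postcomp_inv[OF bg, of g']
          isosD(2,3)[OF a] by (simp add: \<phi>_def \<psi>_def)
    qed
    show "\<forall>a\<in>isos G K. \<phi> (\<psi> a) = a"
    proof clarify
      fix f' g' assume a: "(f', g') \<in> isos G K"
      have "f' ` V G \<subseteq> V K" "g' ` E G \<subseteq> E K"
        using graph_morphD(1,2)[OF isosD(1)[OF a]] by (auto simp: bij_betw_def)
      then show "\<phi> (\<psi> (f', g')) = (f', g')"
        using fix_outside_postcomp[OF bf, of f'] fix_outside_postcomp[OF bg, of g']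
          isosD(2,3)[OF a] by (simp add: \<phi>_def \<psi>_def)
    qed
    show "\<phi> ` isos G H \<subseteq> isos G K"
      using fix_outside_in_isos[OF wfG graph_morph_comp[OF isosD(1) m]] by (auto simp: \<phi>_def)
    show "\<psi> ` isos G K \<subseteq> isos G H"
      using fix_outside_in_isos[OF wfG graph_morph_comp[OF isosD(1) mi]] by (auto simp: \<psi>_def)
  qed
  then show ?thesis by (rule bij_betw_same_card)
qed

lemma finite_isos:
  assumes "finite (V G)" "finite (E G)" "finite (V H)" "finite (E H)"
  shows "finite (isos G H)"
proof -
  let ?r = "\<lambda>(f, g). (restrict f (V G), restrict g (E G))"
  have "inj_on ?r (isos G H)"
  proof (rule inj_onI)
    fix p q assume a: "p \<in> isos G H" "q \<in> isos G H" and eq: "?r p = ?r q"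
    obtain f g f' g' where pq: "p = (f, g)" "q = (f', g')" by fastforce
    have "f x = f' x" for x
      using eq a isosD(2)[of f g G H] isosD(2)[of f' g' G H] unfolding pq
      by (cases "x \<in> V G") (auto dest: fun_cong[where x = x])
    moreover have "g e = g' e" for e
      using eq a isosD(3)[of f g G H] isosD(3)[of f' g' G H] unfolding pq
      by (cases "e \<in> E G") (auto dest: fun_cong[where x = e])
    ultimately show "p = q" unfolding pq by auto
  qed
  moreover have "?r ` isos G H \<subseteq> (V G \<rightarrow>\<^sub>E V H) \<times> (E G \<rightarrow>\<^sub>E E H)"
    using graph_morphD(1,2)[OF isosD(1)] by (fastforce simp: bij_betw_def)
  moreover have "finite ((V G \<rightarrow>\<^sub>E V H) \<times> (E G \<rightarrow>\<^sub>E E H))"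
    using assms by (simp add: finite_PiE)
  ultimately show ?thesis using finite_imageD finite_subset by metis
qed

lemma card_isos_eq_Sym_target:
  assumes "wf_graph H" "wf_graph D"
  shows "card (isos H D) = (if graph_iso H D then Sym D else 0)"
proof (cases "graph_iso H D")
  case True
  then obtain f g where "graph_morph D H f g"
    using graph_iso_sym[OF assms(1)] graph_iso_def by blast
  then show ?thesis using True card_isos_precomp[OF assms(2,1)] by (simp add: Sym_eq_card_isos)
next
  case False
  then show ?thesis using isos_nonempty_iff[OF assms(1), of D] by simp
qed

lemma card_isos_eq_Sym_source:
  assumes "wf_graph G" "wf_graph C" "graph_iso G C"
  shows "card (isos G C) = Sym G"
proof -
  obtain f g where "graph_morph C G f g" using graph_iso_sym[OF assms(1,3)] graph_iso_def by blast
  then show ?thesis using card_isos_postcomp[OF assms(1,2)] by (simp add: Sym_eq_card_isos)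
qed

lemma Sym_pos: "wf_graph G \<Longrightarrow> 0 < Sym G"
  using isos_nonempty_iff[of G G] graph_iso_refl finite_isos[of G G] wf_graphD(1,2)
  by (simp add: Sym_eq_card_isos card_gt_0_iff)

section \<open>Subdividing an electron edge by a photon vertex\<close>

text \<open>This is \<open>insert_photon\<close> with the ends \<open>a\<close>, \<open>b\<close> of \<open>j\<close>, the new vertex \<open>w\<close>
  and the new edge \<open>e'\<close> as parameters; contracting the photon vertex of a vertex graph yields
  a graph of this shape.\<close>

definition attach_photon :: "fgraph \<Rightarrow> nat \<Rightarrow> nat \<Rightarrow> nat \<Rightarrow> nat \<Rightarrow> nat \<Rightarrow> fgraph" where
  "attach_photon G j a b w e' = G\<lparr>V := insert w (V G), E := insert e' (E G),
     ety := (ety G)(e' := El), ends := (ends G)(j := {#a, w#}, e' := {#w, b#}),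
     X := insert 2 (X G), xty := (xty G)(2 := Ph), xv := (xv G)(2 := w)\<rparr>"

lemma attach_photon_simps:
  "V (attach_photon G j a b w e') = insert w (V G)"
  "E (attach_photon G j a b w e') = insert e' (E G)"
  "ety (attach_photon G j a b w e') = (ety G)(e' := El)"
  "ends (attach_photon G j a b w e') = (ends G)(j := {#a, w#}, e' := {#w, b#})"
  "X (attach_photon G j a b w e') = insert 2 (X G)"
  "xty (attach_photon G j a b w e') = (xty G)(2 := Ph)"
  "xv (attach_photon G j a b w e') = (xv G)(2 := w)"
  by (simp_all add: attach_photon_def)

definition end1 :: "fgraph \<Rightarrow> nat \<Rightarrow> nat" where
  "end1 G j = (SOME a. a \<in># ends G j)"

definition end2 :: "fgraph \<Rightarrow> nat \<Rightarrow> nat" where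
  "end2 G j = (SOME b. ends G j = {#end1 G j, b#})"

lemma ends_end1_end2:
  assumes "size (ends G j) = 2"
  shows "ends G j = {#end1 G j, end2 G j#}"
proof -
  have "ends G j \<noteq> {#}" using assms by auto
  then have "end1 G j \<in># ends G j" unfolding end1_def by (metis multiset_nonemptyE someI)
  then obtain b where "ends G j = {#end1 G j, b#}" using assms size_2_msetE by metis
  then show ?thesis unfolding end2_def by (rule someI)
qed

lemma insert_photon_eq_attach_photon:
  assumes "wf_graph G" "j \<in> E G"
  shows "insert_photon G j = attach_photon G j (end1 G j) (end2 G j) (fresh (V G)) (fresh (E G))"
  unfolding insert_photon_def attach_photon_def Let_def end1_def[symmetric]
  using ends_end1_end2[OF wf_graphD(4)[OF assms]] by simp

lemma fresh_notin: "finite A \<Longrightarrow> fresh A \<notin> A"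
  unfolding fresh_def using Max_ge[of "insert 0 A"] by (metis Suc_n_not_le_n finite_insert insertI2)

locale photon_attachment =
  fixes G :: fgraph and j a b w e' :: nat
  assumes finite_V: "finite (V G)" and finite_E: "finite (E G)"
    and ends_size: "\<And>e. e \<in> E G \<Longrightarrow> size (ends G e) = 2"
    and ends_subset: "\<And>e. e \<in> E G \<Longrightarrow> set_mset (ends G e) \<subseteq> V G"
    and legs_in_V: "\<And>l. l \<in> X G \<Longrightarrow> xv G l \<in> V G"
    and edge_j: "j \<in> E G" and ety_j: "ety G j = El" and ends_j: "ends G j = {#a, b#}"
    and fresh_vertex: "w \<notin> V G" and fresh_edge: "e' \<notin> E G" and fresh_leg: "2 \<notin> X G"
begin

abbreviation G' :: fgraph where
  "G' \<equiv> attach_photon G j a b w e'"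

lemma attach_photon_simps' [simp]:
  "V G' = insert w (V G)" "E G' = insert e' (E G)" "X G' = insert 2 (X G)"
  "ety G' e' = El" "ends G' j = {#a, w#}" "ends G' e' = {#w, b#}" "xty G' 2 = Ph" "xv G' 2 = w"
  "e \<in> E G \<Longrightarrow> ety G' e = ety G e"
  "e \<in> E G \<Longrightarrow> e \<noteq> j \<Longrightarrow> ends G' e = ends G e"
  "l \<in> X G \<Longrightarrow> xty G' l = xty G l" "l \<in> X G \<Longrightarrow> xv G' l = xv G l"
  using edge_j fresh_edge fresh_leg by (auto simp: attach_photon_simps)

lemma ends_j_in_V: "a \<in> V G" "b \<in> V G"
  using ends_subset[OF edge_j] ends_j by auto

lemma attach_distinct: "a \<noteq> w" "b \<noteq> w" "j \<noteq> e'"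
  using ends_j_in_V fresh_vertex edge_j fresh_edge by auto

lemma fresh_vertex_notin_ends: "e \<in> E G \<Longrightarrow> w \<notin># ends G e"
  using ends_subset fresh_vertex by blast

lemma incid_attach_photon:
  "incid G' v t = (if v = w then (if t = El then 2 else 1) else incid G v t)"
proof -
  define c where "c H e = (if ety H e = t then count (ends H e) v else 0)" for H :: fgraph and e
  have incid: "incid H v t = (\<Sum>e\<in>E H. c H e) + card {l\<in>X H. xty H l = t \<and> xv H l = v}"
    if "finite (E H)" for H
    using that by (simp add: incid_def c_def sum.inter_filter)
  have fin': "finite (E G')" using finite_E by simp
  have "(\<Sum>e\<in>E G'. c G' e) = c G' e' + c G' j + (\<Sum>e\<in>E G - {j}. c G' e)"
    using finite_E fresh_edge edge_j by (simp add: sum.remove)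
  also have "(\<Sum>e\<in>E G - {j}. c G' e) = (\<Sum>e\<in>E G - {j}. c G e)"
    using fresh_edge by (intro sum.cong) (auto simp: c_def)
  finally have sum: "(\<Sum>e\<in>E G'. c G' e) = c G' e' + c G' j + (\<Sum>e\<in>E G - {j}. c G e)" .
  show ?thesis
  proof (cases "v = w")
    case True
    have "(\<Sum>e\<in>E G - {j}. c G e) = 0"
      using fresh_vertex_notin_ends True by (intro sum.neutral) (auto simp: c_def count_eq_zero_iff)
    then have sum_w: "(\<Sum>e\<in>E G'. c G' e) = (if t = El then 2 else 0)"
      using sum True attach_distinct ety_j edge_j by (auto simp: c_def)
    have legs_w: "{l\<in>X G'. xty G' l = t \<and> xv G' l = v} = (if t = Ph then {2} else {})"
      using True legs_in_V fresh_vertex by auto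
    show ?thesis unfolding incid[OF fin'] sum_w legs_w using True by (cases t) simp_all
  next
    case False
    have "c G' e' + c G' j = c G j"
      using False attach_distinct ety_j ends_j edge_j by (auto simp: c_def)
    then have "(\<Sum>e\<in>E G'. c G' e) = (\<Sum>e\<in>E G. c G e)"
      using sum finite_E edge_j by (simp add: sum.remove)
    moreover have "{l\<in>X G'. xty G' l = t \<and> xv G' l = v} = {l\<in>X G. xty G l = t \<and> xv G l = v}"
      using False fresh_leg by auto
    ultimately show ?thesis using False incid[of G] incid[of G'] finite_E by simp
  qed
qed

lemma wf_attach_photon_iff: "wf_graph G' \<longleftrightarrow> wf_graph G"
proof
  assume wf': "wf_graph G'"
  have "incid G v El = 2 \<and> incid G v Ph = 1" if "v \<in> V G" for v
    using wf_graphD(7,8)[OF wf', of v] that fresh_vertex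
    by (simp add: incid_attach_photon split: if_splits)
  then show "wf_graph G"
    using wf_graphD(3)[OF wf'] finite_V finite_E ends_size ends_subset legs_in_V
    by (simp add: wf_graph_def)
next
  assume wf: "wf_graph G"
  have "size (ends G' e) = 2 \<and> set_mset (ends G' e) \<subseteq> V G'" if "e \<in> E G'" for e
    using that ends_size[of e] ends_subset[of e] ends_j_in_V by (cases "e = j") auto
  moreover have "xv G' l \<in> V G'" if "l \<in> X G'" for l
    using that legs_in_V by auto
  moreover have "incid G' v El = 2 \<and> incid G' v Ph = 1" if "v \<in> V G'" for v
    using that wf_graphD(7,8)[OF wf] by (auto simp: incid_attach_photon)
  ultimately show "wf_graph G'"
    using wf_graphD(3)[OF wf] finite_V finite_E by (simp add: wf_graph_def)
qed

abbreviation parent_edge :: "nat \<Rightarrow> nat" where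
  "parent_edge e \<equiv> if e = e' then j else e"

lemma connected_delete_attach_photon:
  assumes "connected_graph (delete_edge G (parent_edge e))"
  shows "connected_graph (delete_edge G' e)"
proof (rule connected_graph_map[OF assms, where f = id])
  have aw: "reach (delete_edge G' e) a w" if "e \<noteq> j"
    using that attach_distinct edge_j by (intro reach_edge[of j]) auto
  have wb: "reach (delete_edge G' e) w b" if "e \<noteq> e'"
    using that by (intro reach_edge[of e']) auto
  show "reach (delete_edge G' e) (id x) (id y)"
    if xy: "(x, y) \<in> adj (delete_edge G (parent_edge e))" for x y
  proof -
    obtain e0 where e0: "e0 \<in> E G - {parent_edge e}" "ends G e0 = {#x, y#}"
      using xy by (auto simp: adj_iff)
    show ?thesis
    proof (cases "e0 = j")
      case True
      then have "e \<noteq> j" "e \<noteq> e'" using e0 attach_distinct by (auto split: if_splits)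
      then have "reach (delete_edge G' e) a b" using aw wb reach_trans by blast
      moreover have "(x = a \<and> y = b) \<or> (x = b \<and> y = a)"
        using e0 True ends_j by (auto simp: mset_doubleton_eq_iff)
      ultimately show ?thesis using reach_sym by auto
    next
      case False
      then have "e0 \<in> E G' - {e}" "ends G' e0 = {#x, y#}"
        using e0 fresh_edge by (auto split: if_splits)
      then show ?thesis by (auto intro: reach_edge)
    qed
  qed
  show "V (delete_edge G' e) \<noteq> {}" by simp
  show "\<exists>u'\<in>V (delete_edge G (parent_edge e)). reach (delete_edge G' e) (id u') u"
    if "u \<in> V (delete_edge G' e)" for u
  proof (cases "u = w")
    case True
    then show ?thesis
      using aw wb reach_sym ends_j_in_V attach_distinct(3) by (cases "e = j") auto
  next
    case False
    then have "u \<in> V G" using that by simp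
    then show ?thesis by (intro bexI[of _ u]) auto
  qed
qed

lemma connected_delete_attach_photon_cancel:
  assumes "connected_graph (delete_edge G' e)"
  shows "connected_graph (delete_edge G (parent_edge e))"
  \<comment> \<open>the new vertex is sent to an end of \<open>j\<close> it is still adjacent to\<close>
proof (rule connected_graph_map[OF assms, where f = "id(w := if e = j then b else a)"])
  let ?h = "id(w := if e = j then b else a)"
  show "reach (delete_edge G (parent_edge e)) (?h x) (?h y)"
    if xy: "(x, y) \<in> adj (delete_edge G' e)" for x y
  proof -
    obtain e0 where e0: "e0 \<in> insert e' (E G) - {e}" "ends G' e0 = {#x, y#}"
      using xy by (auto simp: adj_iff)
    consider "e0 = e'" | "e0 = j" | "e0 \<in> E G" "e0 \<noteq> j" "e0 \<noteq> e'" using e0 by blast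
    then show ?thesis
    proof cases
      case 1
      then have xy: "(x = w \<and> y = b) \<or> (x = b \<and> y = w)" and "e \<noteq> e'"
        using e0 by (auto simp: mset_doubleton_eq_iff)
      have r: "reach (delete_edge G (parent_edge e)) (?h w) b"
      proof (cases "e = j")
        case False
        then show ?thesis using \<open>e \<noteq> e'\<close> edge_j ends_j by (auto intro: reach_edge[of j])
      qed simp
      have "?h b = b" using attach_distinct by simp
      then show ?thesis using xy r reach_sym[OF r] by auto
    next
      case 2
      then have "(x = a \<and> y = w) \<or> (x = w \<and> y = a)" "e \<noteq> j"
        using e0 attach_distinct by (auto simp: mset_doubleton_eq_iff)
      then show ?thesis using attach_distinct by auto
    next
      case 3
      then have "x \<noteq> w" "y \<noteq> w" "ends G e0 = {#x, y#}"
        using e0 fresh_vertex_notin_ends[of e0] by auto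
      then show ?thesis using 3 e0 by (auto intro: reach_edge)
    qed
  qed
  show "V (delete_edge G (parent_edge e)) \<noteq> {}" using ends_j_in_V by auto
  show "\<exists>u'\<in>V (delete_edge G' e). reach (delete_edge G (parent_edge e)) (?h u') u"
    if "u \<in> V (delete_edge G (parent_edge e))" for u
    using that fresh_vertex by (intro bexI[of _ u]) auto
qed

lemma connected_attach_photon_iff: "connected_graph G' \<longleftrightarrow> connected_graph G"
proof -
  \<comment> \<open>deleting an edge that is not there changes nothing\<close>
  define z where "z = fresh (insert e' (E G))"
  have "z \<notin> insert e' (E G)" unfolding z_def by (rule fresh_notin) (simp add: finite_E)
  then have "delete_edge G' z = G'" "delete_edge G (parent_edge z) = G" "z \<noteq> e'"
    using edge_j by (auto simp: delete_edge_notin)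
  then show ?thesis
    using connected_delete_attach_photon[of z] connected_delete_attach_photon_cancel[of z] by auto
qed

lemma loops_attach_photon: "connected_graph G \<Longrightarrow> loops G' = loops G"
  using connected_attach_photon_iff loops_connected finite_V finite_E fresh_vertex fresh_edge
  by simp

lemma onePI_attach_photon_iff: "onePI G' \<longleftrightarrow> onePI G"
proof
  assume p: "onePI G'"
  then have c: "connected_graph G" using connected_attach_photon_iff by (simp add: onePI_def)
  have "connected_graph (delete_edge G e)" if "e \<in> E G" for e
  proof -
    have "e \<noteq> e'" using that fresh_edge by auto
    then show ?thesis
      using p that connected_delete_attach_photon_cancel[of e] by (simp add: onePI_def)
  qed
  then show "onePI G"
    using p c loops_attach_photon connected_attach_photon_iff by (simp add: onePI_def is_tree_def)
next
  assume p: "onePI G"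
  then have c: "connected_graph G" by (simp add: onePI_def)
  have "connected_graph (delete_edge G' e)" if "e \<in> E G'" for e
    using p that edge_j connected_delete_attach_photon[of e] by (auto simp: onePI_def)
  then show "onePI G'"
    using p c loops_attach_photon connected_attach_photon_iff by (simp add: onePI_def is_tree_def)
qed

end

lemma photon_attachment_insert_photon:
  assumes "wf_graph G" "residue_el G" "j \<in> el_edges G"
  shows "photon_attachment G j (end1 G j) (end2 G j) (fresh (V G)) (fresh (E G))"
proof
  show "j \<in> E G" "ety G j = El" using assms(3) by (auto simp: el_edges_def)
  then show "ends G j = {#end1 G j, end2 G j#}"
    using ends_end1_end2 wf_graphD(4)[OF assms(1)] by blast
  show "fresh (V G) \<notin> V G" "fresh (E G) \<notin> E G"
    using fresh_notin wf_graphD(1,2)[OF assms(1)] by blast+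
  show "2 \<notin> X G" using assms(2) by (simp add: residue_el_def)
qed (use wf_graphD[OF assms(1)] in auto)

lemma insert_photon_properties:
  assumes "wf_graph G" "residue_el G" "j \<in> el_edges G"
  shows "wf_graph (insert_photon G j)" "residue_v (insert_photon G j)"
    "onePI (insert_photon G j) \<longleftrightarrow> onePI G"
    "connected_graph G \<Longrightarrow> loops (insert_photon G j) = loops G"
proof -
  interpret photon_attachment G j "end1 G j" "end2 G j" "fresh (V G)" "fresh (E G)"
    using photon_attachment_insert_photon[OF assms] .
  have eq: "insert_photon G j = G'"
    using insert_photon_eq_attach_photon[OF assms(1) edge_j] .
  show "wf_graph (insert_photon G j)" using wf_attach_photon_iff assms(1) unfolding eq by blast
  show "residue_v (insert_photon G j)"
    using assms(2) unfolding eq by (auto simp: residue_el_def residue_v_def)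
  show "onePI (insert_photon G j) \<longleftrightarrow> onePI G" unfolding eq by (rule onePI_attach_photon_iff)
  show "connected_graph G \<Longrightarrow> loops (insert_photon G j) = loops G"
    unfolding eq by (rule loops_attach_photon)
qed

section \<open>The photon vertex of a vertex graph\<close>

lemma incid_eq_sum:
  assumes "finite (E G)" "{e\<in>E G. ety G e = t \<and> v \<in># ends G e} \<subseteq> S" "S \<subseteq> {e\<in>E G. ety G e = t}"
  shows "incid G v t = (\<Sum>e\<in>S. count (ends G e) v) + card {l\<in>X G. xty G l = t \<and> xv G l = v}"
proof -
  have "(\<Sum>e\<in>{e\<in>E G. ety G e = t}. count (ends G e) v) = (\<Sum>e\<in>S. count (ends G e) v)"
    using assms by (intro sum.mono_neutral_right) (auto simp: count_eq_zero_iff)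
  then show ?thesis by (simp add: incid_def)
qed

lemma incid_lower_bound:
  assumes "finite (E G)" "S \<subseteq> {e\<in>E G. ety G e = t}"
  shows "(\<Sum>e\<in>S. count (ends G e) v) + card {l\<in>X G. xty G l = t \<and> xv G l = v} \<le> incid G v t"
proof -
  have "(\<Sum>e\<in>S. count (ends G e) v) \<le> (\<Sum>e\<in>{e\<in>E G. ety G e = t}. count (ends G e) v)"
    using assms by (intro sum_mono2) auto
  then show ?thesis by (simp add: incid_def)
qed

lemma saturated_electron_vertex:
  assumes wf: "wf_graph G" and v: "v \<in> V G"
    and e12: "e1 \<in> E G" "e2 \<in> E G" "e1 \<noteq> e2" "ety G e1 = El" "ety G e2 = El"
      "v \<in># ends G e1" "v \<in># ends G e2"
  shows "{l\<in>X G. xty G l = El \<and> xv G l = v} = {}"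
    and "\<And>e. e \<in> E G \<Longrightarrow> ety G e = El \<Longrightarrow> v \<in># ends G e \<Longrightarrow> e \<in> {e1, e2}"
proof -
  have fin: "finite (E G)" using wf_graphD(2)[OF wf] .
  have "0 < count (ends G e1) v" "0 < count (ends G e2) v" using e12(6,7) by simp_all
  moreover have "(\<Sum>e\<in>{e1, e2}. count (ends G e) v) = count (ends G e1) v + count (ends G e2) v"
    using e12(3) by simp
  ultimately have count12: "(\<Sum>e\<in>{e1, e2}. count (ends G e) v) \<ge> 2" by linarith
  have "2 + card {l\<in>X G. xty G l = El \<and> xv G l = v} \<le> 2"
    using incid_lower_bound[OF fin, of "{e1, e2}" El v] count12 e12 wf_graphD(7)[OF wf v] by simp
  then show "{l\<in>X G. xty G l = El \<and> xv G l = v} = {}" using wf_graphD(3)[OF wf] by simp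
  show "e \<in> {e1, e2}" if e: "e \<in> E G" "ety G e = El" "v \<in># ends G e" for e
  proof (rule ccontr)
    assume "e \<notin> {e1, e2}"
    then have "(\<Sum>e\<in>insert e {e1, e2}. count (ends G e) v)
        = count (ends G e) v + (\<Sum>e\<in>{e1, e2}. count (ends G e) v)"
      by simp
    moreover have "0 < count (ends G e) v" using e(3) by simp
    ultimately have "(\<Sum>e\<in>insert e {e1, e2}. count (ends G e) v) \<ge> 3" using count12 by linarith
    then show False
      using incid_lower_bound[OF fin, of "insert e {e1, e2}" El v] e12 e wf_graphD(7)[OF wf v]
      by simp
  qed
qed

lemma unique_photon_edge:
  assumes wf: "wf_graph G" and v: "v \<in> V G" and no_leg: "{l\<in>X G. xty G l = Ph \<and> xv G l = v} = {}"
  obtains p where "p \<in> E G" "ety G p = Ph" "v \<in># ends G p"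
    "\<And>e. e \<in> E G \<Longrightarrow> ety G e = Ph \<Longrightarrow> v \<in># ends G e \<Longrightarrow> e = p"
proof -
  let ?P = "{e\<in>E G. ety G e = Ph \<and> v \<in># ends G e}"
  have fin: "finite (E G)" using wf_graphD(2)[OF wf] .
  have "?P \<subseteq> {e\<in>E G. ety G e = Ph}" by auto
  then have "incid G v Ph = (\<Sum>e\<in>?P. count (ends G e) v) + card {l\<in>X G. xty G l = Ph \<and> xv G l = v}"
    by (rule incid_eq_sum[OF fin order_refl])
  then have sum1: "(\<Sum>e\<in>?P. count (ends G e) v) = 1"
    using wf_graphD(8)[OF wf v] unfolding no_leg by simp
  then have "?P \<noteq> {}" by (intro notI) simp
  then obtain p where p: "p \<in> ?P" by blast
  have "e = p" if e: "e \<in> ?P" for e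
  proof (rule ccontr)
    assume "e \<noteq> p"
    then have "(\<Sum>e\<in>{p, e}. count (ends G e) v) = count (ends G p) v + count (ends G e) v"
      by simp
    moreover have "count (ends G e) v \<noteq> 0" "count (ends G p) v \<noteq> 0"
      using p e by (simp_all add: count_eq_zero_iff)
    moreover have "(\<Sum>e\<in>{p, e}. count (ends G e) v) \<le> 1"
      using incid_lower_bound[OF fin, of "{p, e}" Ph v] p e wf_graphD(8)[OF wf v] by simp
    ultimately show False by linarith
  qed
  then show thesis using that p by blast
qed

lemma el_edges_nonempty:
  assumes wf: "wf_graph G" and "onePI G" "residue_el G"
  shows "el_edges G \<noteq> {}"
proof
  assume no_El: "el_edges G = {}"
  have legs: "X G = {0, 1}" "xty G 0 = El" "xty G 1 = El"
    using assms(3) by (auto simp: residue_el_def)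
  have fin: "finite (E G)" using wf_graphD(2)[OF wf] .
  have "v = xv G 0" if "v \<in> V G" for v
  proof -
    have "incid G v El = card {l\<in>X G. xty G l = El \<and> xv G l = v}"
      using incid_eq_sum[OF fin, of El v "{}"] no_El by (auto simp: el_edges_def)
    then have "card {l\<in>X G. xty G l = El \<and> xv G l = v} = 2" using wf_graphD(7)[OF wf that] by simp
    moreover have "{l\<in>X G. xty G l = El \<and> xv G l = v} \<subseteq> {0, 1}" using legs by auto
    ultimately have "{l\<in>X G. xty G l = El \<and> xv G l = v} = {0, 1}"
      by (intro card_subset_eq) simp_all
    then have "0 \<in> {l\<in>X G. xty G l = El \<and> xv G l = v}" by simp
    then show ?thesis by simp
  qed
  moreover obtain e where e: "e \<in> E G" using onePI_edges_nonempty[OF assms(2)] by blast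
  ultimately have "set_mset (ends G e) \<subseteq> {xv G 0}" using wf_graphD(5)[OF wf e] by blast
  then have "ends G e = replicate_mset (size (ends G e)) (xv G 0)"
    by (rule set_mset_subset_singletonD)
  then have "ends G e = {#xv G 0, xv G 0#}"
    using wf_graphD(4)[OF wf e] by (simp add: numeral_2_eq_2)
  moreover have "ety G e = Ph" using e no_El by (cases "ety G e") (auto simp: el_edges_def)
  ultimately have "2 \<le> incid G (xv G 0) Ph"
    using incid_lower_bound[OF fin, of "{e}" Ph "xv G 0"] e by simp
  then show False using wf_graphD(8)[OF wf, of "xv G 0"] wf_graphD(6)[OF wf, of 0] legs by simp
qed

locale vertex_graph =
  fixes D :: fgraph
  assumes wf: "wf_graph D" and onePI: "onePI D" and residue: "residue_v D"
begin

abbreviation pv :: nat where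
  "pv \<equiv> xv D 2"

lemma legs: "X D = {0, 1, 2}" "xty D 0 = El" "xty D 1 = El" "xty D 2 = Ph"
  using residue by (auto simp: residue_v_def)

lemma pv_in_V: "pv \<in> V D"
  using wf_graphD(6)[OF wf, of 2] legs by simp

lemma ety_at_pv:
  assumes "e \<in> E D" "pv \<in># ends D e"
  shows "ety D e = El"
proof (rule ccontr)
  assume "ety D e \<noteq> El"
  then have "ety D e = Ph" by (cases "ety D e") auto
  then have "count (ends D e) pv + card {l\<in>X D. xty D l = Ph \<and> xv D l = pv} \<le> incid D pv Ph"
    using incid_lower_bound[OF wf_graphD(2)[OF wf], of "{e}" Ph pv] assms(1) by simp
  moreover have "{l\<in>X D. xty D l = Ph \<and> xv D l = pv} = {2}" using legs by auto
  ultimately show False using assms(2) wf_graphD(8)[OF wf pv_in_V] by (simp add: count_eq_zero_iff)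
qed

lemma degree_pv:
  "(\<Sum>e\<in>{e\<in>E D. pv \<in># ends D e}. count (ends D e) pv)
     + card {l\<in>X D. xty D l = El \<and> xv D l = pv} = 2"
  using incid_eq_sum[OF wf_graphD(2)[OF wf], of El pv "{e\<in>E D. pv \<in># ends D e}"]
    ety_at_pv wf_graphD(7)[OF wf pv_in_V] by auto

text \<open>An electron leg at the photon vertex leaves room for only one edge end there, which would make
  that edge a bridge.\<close>

lemma no_electron_leg_at_pv: "xv D 0 \<noteq> pv" "xv D 1 \<noteq> pv"
proof -
  let ?Ew = "{e\<in>E D. pv \<in># ends D e}"
  have "card {l\<in>X D. xty D l = El \<and> xv D l = pv} = 0"
  proof (rule ccontr)
    assume "card {l\<in>X D. xty D l = El \<and> xv D l = pv} \<noteq> 0"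
    then have le1: "(\<Sum>e\<in>?Ew. count (ends D e) pv) \<le> 1" using degree_pv by linarith
    then have "card ?Ew \<le> 1" using card_le_sum_count[of "E D" pv "ends D"] by linarith
    moreover obtain e where e: "e \<in> E D" "pv \<in># ends D e"
      using onePI_vertex_has_edge[OF wf onePI pv_in_V] by blast
    moreover have "finite ?Ew" using wf_graphD(2)[OF wf] by simp
    ultimately have only_e: "e' = e" if "e' \<in> E D" "pv \<in># ends D e'" for e'
      using that card_le_Suc0_iff_eq[of ?Ew] by auto
    then have "?Ew = {e}" using e by blast
    then have "count (ends D e) pv = 1"
      using le1 e(2) by (simp add: le_Suc_eq count_eq_zero_iff)
    then obtain u where "ends D e = {#pv, u#}" "u \<noteq> pv"
      using size_2_mset_count_1E[OF wf_graphD(4)[OF wf e(1)]] by blast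
    then show False using onePI_no_pendant_edge[OF wf onePI e(1)] only_e by blast
  qed
  moreover have "finite {l\<in>X D. xty D l = El \<and> xv D l = pv}" using legs by simp
  ultimately have "{l\<in>X D. xty D l = El \<and> xv D l = pv} = {}" by simp
  then show "xv D 0 \<noteq> pv" "xv D 1 \<noteq> pv" using legs by blast+
qed

lemma no_loop_at_pv: "e \<in> E D \<Longrightarrow> ends D e \<noteq> {#pv, pv#}"
proof
  assume e: "e \<in> E D" and loop: "ends D e = {#pv, pv#}"
  have only_e: "e' = e" if e': "e' \<in> E D" "pv \<in># ends D e'" for e'
  proof (rule ccontr)
    assume "e' \<noteq> e"
    moreover have "0 < count (ends D e') pv" using e'(2) by simp
    ultimately have "(\<Sum>x\<in>{e, e'}. count (ends D x) pv) \<ge> 3" using loop by simp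
    moreover have "(\<Sum>x\<in>{e, e'}. count (ends D x) pv) + card {l\<in>X D. xty D l = El \<and> xv D l = pv}
        \<le> incid D pv El"
      using e e' ety_at_pv[OF e'] ety_at_pv[OF e] loop
      by (intro incid_lower_bound[OF wf_graphD(2)[OF wf]]) auto
    ultimately show False using wf_graphD(7)[OF wf pv_in_V] by simp
  qed
  have "xv D 0 \<in> {pv}"
  proof (rule connected_graph_closed_set[OF _ _ _ pv_in_V])
    show "connected_graph D" using onePI by (simp add: onePI_def)
    show "xv D 0 \<in> V D" using wf_graphD(6)[OF wf, of 0] legs by simp
  qed (use only_e loop in auto)
  then show False using no_electron_leg_at_pv by simp
qed

lemma edges_at_pv:
  obtains e1 e2 a b where "{e\<in>E D. pv \<in># ends D e} = {e1, e2}" "e1 \<noteq> e2"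
    "ends D e1 = {#pv, a#}" "ends D e2 = {#pv, b#}" "a \<noteq> pv" "b \<noteq> pv"
proof -
  let ?Ew = "{e\<in>E D. pv \<in># ends D e}"
  have no_legs: "{l\<in>X D. xty D l = El \<and> xv D l = pv} = {}"
    using legs no_electron_leg_at_pv by auto
  have deg: "(\<Sum>e\<in>?Ew. count (ends D e) pv) = 2" using degree_pv unfolding no_legs by simp
  have count1: "count (ends D e) pv = 1" if "e \<in> ?Ew" for e
  proof -
    have "count (ends D e) pv \<le> 2"
      using that deg member_le_sum[of e ?Ew "\<lambda>e. count (ends D e) pv"] wf_graphD(2)[OF wf] by simp
    moreover have "count (ends D e) pv \<noteq> 2"
      using that no_loop_at_pv size_2_mset_count_2[OF wf_graphD(4)[OF wf]] by blast
    ultimately show ?thesis using that by (simp add: le_Suc_eq count_eq_zero_iff numeral_2_eq_2)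
  qed
  then have "card ?Ew = 2" using deg by simp
  then obtain e1 e2 where Ew: "?Ew = {e1, e2}" "e1 \<noteq> e2" by (auto simp: card_2_iff)
  then have "e1 \<in> ?Ew" "e2 \<in> ?Ew" by blast+
  then obtain a b where "ends D e1 = {#pv, a#}" "a \<noteq> pv" "ends D e2 = {#pv, b#}" "b \<noteq> pv"
    using count1 size_2_mset_count_1E wf_graphD(4)[OF wf]
    by (metis (no_types, lifting) mem_Collect_eq)
  then show thesis using that[OF Ew] by blast
qed

text \<open>If both edges at the photon vertex led to the same vertex \<open>a\<close>, the photon edge at \<open>a\<close> would be
  a bridge cutting off \<open>{pv, a}\<close>.\<close>

lemma pv_neighbours_distinct:
  assumes Ew: "{e\<in>E D. pv \<in># ends D e} = {e1, e2}" and "e1 \<noteq> e2"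
    and e1: "ends D e1 = {#pv, a#}" and e2: "ends D e2 = {#pv, b#}" and "a \<noteq> pv"
  shows "a \<noteq> b"
proof
  assume "a = b"
  have "e1 \<in> {e\<in>E D. pv \<in># ends D e}" "e2 \<in> {e\<in>E D. pv \<in># ends D e}"
    unfolding Ew by simp_all
  then have E12: "e1 \<in> E D" "e2 \<in> E D" "ety D e1 = El" "ety D e2 = El"
    using ety_at_pv by simp_all
  have aV: "a \<in> V D" using wf_graphD(5)[OF wf E12(1)] e1 by auto
  note sat = saturated_electron_vertex[OF wf aV E12(1,2) \<open>e1 \<noteq> e2\<close> E12(3,4)]
  have "{l\<in>X D. xty D l = El \<and> xv D l = a} = {}" using sat e1 e2 \<open>a = b\<close> by simp
  then have leg0: "xv D 0 \<noteq> a" using legs by auto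
  have no_Ph_leg: "{l\<in>X D. xty D l = Ph \<and> xv D l = a} = {}" using legs \<open>a \<noteq> pv\<close> by auto
  obtain p where p: "p \<in> E D" "ety D p = Ph" "a \<in># ends D p"
    and unique_p: "\<And>e. e \<in> E D \<Longrightarrow> ety D e = Ph \<Longrightarrow> a \<in># ends D e \<Longrightarrow> e = p"
    using unique_photon_edge[OF wf aV no_Ph_leg] by blast
  have "xv D 0 \<in> {pv, a}"
  proof (rule onePI_delete_edge_closed_set[OF onePI p(1)])
    show "set_mset (ends D e) \<subseteq> {pv, a}"
      if e: "e \<in> E D" "e \<noteq> p" "set_mset (ends D e) \<inter> {pv, a} \<noteq> {}" for e
    proof -
      have "e \<in> {e1, e2}"
      proof (cases "pv \<in># ends D e")
        case True
        then have "e \<in> {e\<in>E D. pv \<in># ends D e}" using e(1) by simp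
        then show ?thesis unfolding Ew .
      next
        case False
        then have "a \<in># ends D e" using e(3) by auto
        then show ?thesis using sat(2) unique_p e(1,2) e1 e2 \<open>a = b\<close> by (cases "ety D e") auto
      qed
      then show ?thesis using e1 e2 \<open>a = b\<close> by auto
    qed
  qed (use pv_in_V wf_graphD(6)[OF wf, of 0] legs in auto)
  then show False using leg0 no_electron_leg_at_pv by auto
qed

lemma contract_photon_vertex:
  obtains C e1 a b e2 where "D = attach_photon C e1 a b pv e2"
    "photon_attachment C e1 a b pv e2" "a \<noteq> b" "residue_el C"
proof -
  obtain e1 e2 a b where Ew: "{e\<in>E D. pv \<in># ends D e} = {e1, e2}" and "e1 \<noteq> e2"
    and e1: "ends D e1 = {#pv, a#}" and e2: "ends D e2 = {#pv, b#}" and "a \<noteq> pv" "b \<noteq> pv"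
    by (rule edges_at_pv)
  have "a \<noteq> b" using pv_neighbours_distinct[OF Ew \<open>e1 \<noteq> e2\<close> e1 e2 \<open>a \<noteq> pv\<close>] .
  have "e1 \<in> {e\<in>E D. pv \<in># ends D e}" "e2 \<in> {e\<in>E D. pv \<in># ends D e}" unfolding Ew by simp_all
  then have E12: "e1 \<in> E D" "e2 \<in> E D" "ety D e1 = El" "ety D e2 = El"
    using ety_at_pv by simp_all
  have ab: "a \<in> V D" "b \<in> V D"
    using wf_graphD(5)[OF wf E12(1)] wf_graphD(5)[OF wf E12(2)] e1 e2 by auto
  have pv_only: "pv \<notin># ends D e" if "e \<in> E D" "e \<noteq> e1" "e \<noteq> e2" for e
    using that Ew by blast
  define C where "C = D\<lparr>V := V D - {pv}, E := E D - {e2}, ends := (ends D)(e1 := {#a, b#}),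
    X := X D - {2}\<rparr>"
  have "insert pv (V D - {pv}) = V D" "insert e2 (E D - {e2}) = E D" "(ety D)(e2 := El) = ety D"
    "(ends D)(e1 := {#a, b#}, e1 := {#a, pv#}, e2 := {#pv, b#}) = ends D"
    "insert 2 (X D - {2}) = X D" "(xty D)(2 := Ph) = xty D" "(xv D)(2 := pv) = xv D"
    using pv_in_V E12 e1 e2 \<open>e1 \<noteq> e2\<close> legs by (auto simp: add_mset_commute)
  then have "D = attach_photon C e1 a b pv e2" by (simp add: attach_photon_def C_def)
  moreover have "photon_attachment C e1 a b pv e2"
  proof
    show "finite (V C)" "finite (E C)" using wf_graphD(1,2)[OF wf] by (simp_all add: C_def)
    show "size (ends C e) = 2" "set_mset (ends C e) \<subseteq> V C" if "e \<in> E C" for e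
      using that wf_graphD(4,5)[OF wf, of e] pv_only[of e] ab \<open>a \<noteq> pv\<close> \<open>b \<noteq> pv\<close>
      by (auto simp: C_def)
    show "xv C l \<in> V C" if "l \<in> X C" for l
      using that wf_graphD(6)[OF wf, of l] no_electron_leg_at_pv legs by (auto simp: C_def)
  qed (use E12 \<open>e1 \<noteq> e2\<close> legs in \<open>auto simp: C_def\<close>)
  moreover have "residue_el C" using legs by (auto simp: C_def residue_el_def)
  ultimately show thesis using that \<open>a \<noteq> b\<close> by blast
qed

end

section \<open>Isomorphisms of subdivided graphs\<close>

lemma bij_betw_fun_upd_insert:
  "bij_betw f A B \<Longrightarrow> x \<notin> A \<Longrightarrow> y \<notin> B \<Longrightarrow> bij_betw (f(x := y)) (insert x A) (insert y B)"
  by (auto simp: bij_betw_def inj_on_def image_def)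

locale attachment_pair =
  src: photon_attachment G j aj bj wj ej + tgt: photon_attachment C e1 a b w e2
  for G j aj bj wj ej C e1 a b w e2
begin

lemma morph_halves:
  assumes m: "graph_morph src.G' tgt.G' f g"
  shows "f wj = w"
    "(g j = e1 \<and> g ej = e2 \<and> f aj = a \<and> f bj = b) \<or> (g j = e2 \<and> g ej = e1 \<and> f aj = b \<and> f bj = a)"
proof -
  show fw: "f wj = w" using graph_morphD(7)[OF m, of 2] by simp
  have bg: "bij_betw g (insert ej (E G)) (insert e2 (E C))"
    using graph_morphD(2)[OF m] by simp
  have at_w: "e \<in> {e1, e2}" if "e \<in> insert e2 (E C)" "w \<in># ends tgt.G' e" for e
    using that tgt.fresh_vertex_notin_ends[of e] by (cases "e = e1") auto
  have gj: "ends tgt.G' (g j) = {#f aj, w#}" "g j \<in> insert e2 (E C)"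
    using graph_morphD(4)[OF m, of j] fw src.edge_j bg by (auto simp: bij_betw_def)
  have gej: "ends tgt.G' (g ej) = {#w, f bj#}" "g ej \<in> insert e2 (E C)"
    using graph_morphD(4)[OF m, of ej] fw bg by (auto simp: bij_betw_def)
  have "g j \<noteq> g ej"
    using bg src.edge_j src.attach_distinct(3) by (auto simp: bij_betw_def inj_on_def)
  moreover have "g j \<in> {e1, e2}" "g ej \<in> {e1, e2}" using at_w gj gej by auto
  ultimately consider "g j = e1" "g ej = e2" | "g j = e2" "g ej = e1" by fastforce
  then show "(g j = e1 \<and> g ej = e2 \<and> f aj = a \<and> f bj = b)
    \<or> (g j = e2 \<and> g ej = e1 \<and> f aj = b \<and> f bj = a)"
  proof cases
    case 1
    \<comment> \<open>plain \<open>simp\<close> would substitute the derived \<open>a = f aj\<close> into \<open>tgt.G'\<close>\<close>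
    have "{#a, w#} = {#f aj, w#}" "{#w, b#} = {#w, f bj#}"
      using gj(1) gej(1) 1 by (simp only: tgt.attach_photon_simps')+
    then have "f aj = a" "f bj = b"
      using tgt.attach_distinct(1,2) unfolding mset_doubleton_eq_iff by auto
    then show ?thesis using 1 by simp
  next
    case 2
    have "{#w, b#} = {#f aj, w#}" "{#a, w#} = {#w, f bj#}"
      using gj(1) gej(1) 2 by (simp only: tgt.attach_photon_simps')+
    then have "f aj = b" "f bj = a"
      using tgt.attach_distinct(1,2) unfolding mset_doubleton_eq_iff by auto
    then show ?thesis using 2 by simp
  qed
qed

lemma morph_restrict:
  assumes m: "graph_morph src.G' tgt.G' f g"
  shows "graph_morph G C f (g(j := e1))"
proof -
  note halves = morph_halves[OF m]
  have "bij_betw f (insert wj (V G) - {wj}) (insert w (V C) - {w})"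
    using graph_morphD(1)[OF m] halves(1) by (intro bij_betw_DiffI) auto
  then have bf: "bij_betw f (V G) (V C)"
    using src.fresh_vertex tgt.fresh_vertex by simp
  have "bij_betw g (insert ej (E G) - {j, ej}) (insert e2 (E C) - {e1, e2})"
    using graph_morphD(2)[OF m] halves(2) src.edge_j tgt.edge_j src.attach_distinct(3)
      tgt.attach_distinct(3)
    by (intro bij_betw_DiffI) (auto simp: bij_betw_def)
  moreover have "insert ej (E G) - {j, ej} = E G - {j}" "insert e2 (E C) - {e1, e2} = E C - {e1}"
    using src.fresh_edge tgt.fresh_edge by auto
  ultimately have bg: "bij_betw g (E G - {j}) (E C - {e1})" by simp
  then have "bij_betw (g(j := e1)) (insert j (E G - {j})) (insert e1 (E C - {e1}))"
    by (rule bij_betw_fun_upd_insert) (auto intro: bij_betw_cong)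
  then have bg': "bij_betw (g(j := e1)) (E G) (E C)"
    using src.edge_j tgt.edge_j by (simp add: insert_absorb)
  have "ety C ((g(j := e1)) e) = ety G e \<and> ends C ((g(j := e1)) e) = image_mset f (ends G e)"
    if "e \<in> E G" for e
  proof (cases "e = j")
    case True
    then show ?thesis using halves(2) src.ety_j tgt.ety_j src.ends_j tgt.ends_j
      by (auto simp: add_mset_commute)
  next
    case False
    then have "g e \<in> E C" "g e \<noteq> e1" using bg that by (auto simp: bij_betw_def)
    then show ?thesis
      using graph_morphD(3,4)[OF m, of e] that False by simp
  qed
  moreover have "X C = X G"
    using graph_morphD(5)[OF m] src.fresh_leg tgt.fresh_leg by (simp add: insert_ident)
  moreover have "xty C l = xty G l \<and> xv C l = f (xv G l)" if "l \<in> X G" for l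
    using graph_morphD(6,7)[OF m, of l] that \<open>X C = X G\<close> by simp
  ultimately show ?thesis using bf bg' by (simp add: graph_morph_def)
qed

lemma bij_betw_extend_edges:
  assumes bg: "bij_betw g (E G) (E C)" and gj: "g j = e1"
  shows "bij_betw (if P then g(ej := e2) else g(j := e2, ej := e1))
    (insert ej (E G)) (insert e2 (E C))"
proof (cases P)
  case True
  then show ?thesis using bg src.fresh_edge tgt.fresh_edge by (auto intro: bij_betw_fun_upd_insert)
next
  case False
  have "bij_betw g (E G - {j}) (E C - {e1})"
    using bg gj src.edge_j tgt.edge_j by (intro bij_betw_DiffI) auto
  then have "bij_betw (g(j := e2)) (insert j (E G - {j})) (insert e2 (E C - {e1}))"
    by (rule bij_betw_fun_upd_insert) (use tgt.fresh_edge in auto)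
  then have "bij_betw (g(j := e2, ej := e1)) (insert ej (insert j (E G - {j})))
      (insert e1 (insert e2 (E C - {e1})))"
    by (rule bij_betw_fun_upd_insert)
      (use src.fresh_edge src.attach_distinct(3) tgt.attach_distinct(3) in auto)
  moreover have "insert ej (insert j (E G - {j})) = insert ej (E G)"
    "insert e1 (insert e2 (E C - {e1})) = insert e2 (E C)"
    using src.edge_j tgt.edge_j by auto
  ultimately show ?thesis using False by simp
qed

lemma morph_extend_ends:
  assumes m: "graph_morph G C f g" and gj: "g j = e1"
  shows "(f aj = a \<and> f bj = b) \<or> (f aj = b \<and> f bj = a)"
proof -
  have "{#f aj, f bj#} = {#a, b#}"
    using graph_morphD(4)[OF m src.edge_j] gj src.ends_j tgt.ends_j by simp
  then show ?thesis by (simp add: mset_doubleton_eq_iff)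
qed

lemma morph_extend_edge:
  assumes m: "graph_morph G C f g" and gj: "g j = e1" and e: "e \<in> insert ej (E G)"
  defines "g' \<equiv> if f aj = a then g(ej := e2) else g(j := e2, ej := e1)"
  shows "ety tgt.G' (g' e) = ety src.G' e
    \<and> ends tgt.G' (g' e) = image_mset (f(wj := w)) (ends src.G' e)"
proof -
  note fab = morph_extend_ends[OF m gj]
  consider "e = ej" | "e = j" | "e \<in> E G" "e \<noteq> j" using e by blast
  then show ?thesis
  proof cases
    case 1
    then show ?thesis
      using fab tgt.ety_j src.attach_distinct(3) tgt.attach_distinct(3) src.fresh_vertex
        src.ends_j_in_V by (auto simp: g'_def add_mset_commute attach_photon_simps)
  next
    case 2
    then show ?thesis
      using fab gj tgt.ety_j src.ety_j src.edge_j src.attach_distinct tgt.attach_distinct(3)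
      by (auto simp: g'_def add_mset_commute attach_photon_simps)
  next
    case 3
    then have "g e \<in> E C" "g e \<noteq> e1"
      using graph_morphD(2)[OF m] gj src.edge_j by (auto simp: bij_betw_def inj_on_def)
    moreover have "image_mset (f(wj := w)) (ends G e) = image_mset f (ends G e)"
      using src.fresh_vertex_notin_ends[OF 3(1)] by (intro multiset.map_cong0) auto
    ultimately show ?thesis
      using graph_morphD(3,4)[OF m 3(1)] 3 src.fresh_edge by (auto simp: g'_def)
  qed
qed

lemma morph_extend:
  assumes m: "graph_morph G C f g" and gj: "g j = e1"
  defines "g' \<equiv> if f aj = a then g(ej := e2) else g(j := e2, ej := e1)"
  shows "graph_morph src.G' tgt.G' (f(wj := w)) g'"
proof -
  have "bij_betw (f(wj := w)) (insert wj (V G)) (insert w (V C))"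
    using graph_morphD(1)[OF m] src.fresh_vertex tgt.fresh_vertex by (rule bij_betw_fun_upd_insert)
  moreover have "bij_betw g' (insert ej (E G)) (insert e2 (E C))"
    unfolding g'_def using graph_morphD(2)[OF m] gj by (rule bij_betw_extend_edges)
  moreover have "X tgt.G' = X src.G'" using graph_morphD(5)[OF m] by simp
  moreover have "xty tgt.G' l = xty src.G' l \<and> xv tgt.G' l = (f(wj := w)) (xv src.G' l)"
    if "l \<in> X src.G'" for l
    using that graph_morphD(5)[OF m] graph_morphD(6,7)[OF m, of l] src.legs_in_V[of l]
      src.fresh_vertex by (cases "l = 2") auto
  ultimately show ?thesis
    using morph_extend_edge[OF m gj] by (simp add: graph_morph_def g'_def)
qed

lemma morph_halves_determined:
  assumes "graph_morph src.G' tgt.G' f g" "a \<noteq> b"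
  shows "g j = (if f aj = a then e1 else e2)" "g ej = (if f aj = a then e2 else e1)"
  using morph_halves(2)[OF assms(1)] assms(2) by auto

lemma isos_restrict:
  assumes "wf_graph G" "(f, g) \<in> isos src.G' tgt.G'"
  shows "(fix_outside (V G) f, fix_outside (E G) (g(j := e1))) \<in> isos G C"
  using fix_outside_in_isos[OF assms(1) morph_restrict[OF isosD(1)[OF assms(2)]]] .

text \<open>Since the ends \<open>a \<noteq> b\<close> of \<open>e1\<close> are distinguished, the image of \<open>aj\<close> decides which half of
  \<open>j\<close> goes to which half of \<open>e1\<close>: the restriction loses no information.\<close>

lemma isos_restrict_inj:
  assumes "a \<noteq> b" and fg: "(f, g) \<in> isos src.G' tgt.G'" and fg': "(f', g') \<in> isos src.G' tgt.G'"
    and f: "fix_outside (V G) f = fix_outside (V G) f'"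
    and g: "fix_outside (E G) (g(j := e1)) = fix_outside (E G) (g'(j := e1))"
  shows "f = f'" "g = g'"
proof -
  note m = isosD(1)[OF fg] and m' = isosD(1)[OF fg']
  have "f x = f' x" for x
    using fun_cong[OF f, of x] morph_halves(1)[OF m] morph_halves(1)[OF m']
      isosD(2)[OF fg, of x] isosD(2)[OF fg', of x]
    by (cases "x = wj") (auto simp: fix_outside_def split: if_splits)
  then show "f = f'" ..
  then have halves: "g j = g' j" "g ej = g' ej"
    using morph_halves_determined[OF m \<open>a \<noteq> b\<close>] morph_halves_determined[OF m' \<open>a \<noteq> b\<close>] by simp_all
  show "g = g'"
  proof
    fix x
    show "g x = g' x"
      using halves fun_cong[OF g, of x] isosD(3)[OF fg, of x] isosD(3)[OF fg', of x]
      by (cases "x \<in> {j, ej}") (auto simp: fix_outside_def split: if_splits)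
  qed
qed

lemma isos_extend:
  assumes "wf_graph G" and fg: "(f, g) \<in> isos G C" and "g j = e1"
  obtains f' g' where "(f', g') \<in> isos src.G' tgt.G'" "fix_outside (V G) f' = f"
    "fix_outside (E G) (g'(j := e1)) = g"
proof -
  define g'' where "g'' = (if f aj = a then g(ej := e2) else g(j := e2, ej := e1))"
  have m: "graph_morph src.G' tgt.G' (f(wj := w)) g''"
    unfolding g''_def by (rule morph_extend[OF isosD(1)[OF fg] \<open>g j = e1\<close>])
  have "wf_graph src.G'" using assms(1) src.wf_attach_photon_iff by simp
  note iso = fix_outside_in_isos[OF this m]
  moreover have "fix_outside (V G) (fix_outside (V src.G') (f(wj := w))) = f"
    using isosD(2)[OF fg] src.fresh_vertex by (auto simp: fix_outside_def)
  moreover have "fix_outside (E G) ((fix_outside (E src.G') g'')(j := e1)) = g"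
    using isosD(3)[OF fg] src.fresh_edge src.edge_j \<open>g j = e1\<close>
    by (auto simp: fix_outside_def g''_def)
  ultimately show thesis using that by blast
qed

end

lemma attachment_pair_insert_photon:
  assumes "wf_graph G" "residue_el G" "j \<in> el_edges G" "photon_attachment C e1 a b w e2"
  shows "attachment_pair G j (end1 G j) (end2 G j) (fresh (V G)) (fresh (E G)) C e1 a b w e2"
  using photon_attachment_insert_photon[OF assms(1-3)] assms(4) by (simp add: attachment_pair_def)

definition contract_iso ::
  "fgraph \<Rightarrow> nat \<Rightarrow> nat \<times> (nat \<Rightarrow> nat) \<times> (nat \<Rightarrow> nat) \<Rightarrow> (nat \<Rightarrow> nat) \<times> (nat \<Rightarrow> nat)" where
  "contract_iso G e1 = (\<lambda>(j, f, g). (fix_outside (V G) f, fix_outside (E G) (g(j := e1))))"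

definition insertion_isos :: "fgraph \<Rightarrow> fgraph \<Rightarrow> (nat \<times> (nat \<Rightarrow> nat) \<times> (nat \<Rightarrow> nat)) set" where
  "insertion_isos G D = (SIGMA j:el_edges G. isos (insert_photon G j) D)"

context
  fixes G C :: fgraph and e1 a b w e2 :: nat
  assumes G: "wf_graph G" "residue_el G"
    and C: "photon_attachment C e1 a b w e2" "wf_graph C" "a \<noteq> b"
begin

lemma contract_iso_in_isos:
  assumes "j \<in> el_edges G" "(f, g) \<in> isos (insert_photon G j) (attach_photon C e1 a b w e2)"
  shows "contract_iso G e1 (j, f, g) \<in> isos G C"
proof -
  interpret attachment_pair G j "end1 G j" "end2 G j" "fresh (V G)" "fresh (E G)" C e1 a b w e2
    using attachment_pair_insert_photon[OF G assms(1) C(1)] .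
  show ?thesis
    using isos_restrict[OF G(1)] assms insert_photon_eq_attach_photon[OF G(1)]
    by (simp add: contract_iso_def el_edges_def)
qed

lemma inj_on_contract_iso:
  "inj_on (contract_iso G e1) (insertion_isos G (attach_photon C e1 a b w e2))"
proof (rule inj_onI)
  fix p p' assume "p \<in> insertion_isos G (attach_photon C e1 a b w e2)"
    "p' \<in> insertion_isos G (attach_photon C e1 a b w e2)"
    "contract_iso G e1 p = contract_iso G e1 p'"
  moreover obtain j f g j' f' g' where p: "p = (j, f, g)" "p' = (j', f', g')" by (cases p, cases p')
  ultimately have j: "j \<in> el_edges G" "j' \<in> el_edges G"
    and fg: "(f, g) \<in> isos (insert_photon G j) (attach_photon C e1 a b w e2)"
      "(f', g') \<in> isos (insert_photon G j') (attach_photon C e1 a b w e2)"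
    and eq: "contract_iso G e1 (j, f, g) = contract_iso G e1 (j', f', g')"
    by (simp_all add: insertion_isos_def)
  let ?h = "fix_outside (E G) (g(j := e1))"
  have "(fix_outside (V G) f, ?h) \<in> isos G C"
    using contract_iso_in_isos[OF j(1) fg(1)] by (simp add: contract_iso_def)
  then have "inj_on ?h (E G)" using graph_morphD(2)[OF isosD(1)] by (auto simp: bij_betw_def)
  moreover have "?h j = e1" using j by (simp add: fix_outside_def el_edges_def)
  moreover have "?h = fix_outside (E G) (g'(j' := e1))" using eq by (simp add: contract_iso_def)
  then have "?h j' = e1" using j by (simp add: fix_outside_def el_edges_def)
  ultimately have jj: "j = j'"
    using j unfolding el_edges_def by (metis (mono_tags) inj_onD mem_Collect_eq)
  interpret attachment_pair G j "end1 G j" "end2 G j" "fresh (V G)" "fresh (E G)" C e1 a b w e2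
    using attachment_pair_insert_photon[OF G j(1) C(1)] .
  have "(f, g) \<in> isos src.G' tgt.G'" "(f', g') \<in> isos src.G' tgt.G'"
    using fg insert_photon_eq_attach_photon[OF G(1)] j jj by (auto simp: el_edges_def)
  moreover have "fix_outside (V G) f = fix_outside (V G) f'"
    "fix_outside (E G) (g(j := e1)) = fix_outside (E G) (g'(j := e1))"
    using eq jj by (simp_all add: contract_iso_def)
  ultimately have "f = f'" "g = g'" using isos_restrict_inj[OF C(3)] by blast+
  then show "p = p'" using jj p by simp
qed

lemma isos_subset_contract_iso_image:
  "isos G C \<subseteq> contract_iso G e1 ` insertion_isos G (attach_photon C e1 a b w e2)"
proof clarify
  fix f g assume fg: "(f, g) \<in> isos G C"
  have bg: "bij_betw g (E G) (E C)" using graph_morphD(2)[OF isosD(1)[OF fg]] .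
  define j where "j = inv_into (E G) g e1"
  have j: "j \<in> E G" "g j = e1"
    using bg photon_attachment.edge_j[OF C(1)] unfolding j_def
    by (auto simp: bij_betw_def inv_into_into f_inv_into_f)
  then have "j \<in> el_edges G"
    using graph_morphD(3)[OF isosD(1)[OF fg]] photon_attachment.ety_j[OF C(1)]
    by (auto simp: el_edges_def)
  then interpret attachment_pair G j "end1 G j" "end2 G j" "fresh (V G)" "fresh (E G)" C e1 a b w e2
    using attachment_pair_insert_photon[OF G _ C(1)] by simp
  obtain f' g' where "(f', g') \<in> isos src.G' tgt.G'" "fix_outside (V G) f' = f"
    "fix_outside (E G) (g'(j := e1)) = g"
    using isos_extend[OF G(1) fg j(2)] .
  then show "(f, g) \<in> contract_iso G e1 ` insertion_isos G (attach_photon C e1 a b w e2)"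
    using \<open>j \<in> el_edges G\<close> j(1) insert_photon_eq_attach_photon[OF G(1) j(1)]
    by (auto simp: contract_iso_def insertion_isos_def intro!: image_eqI[of _ _ "(j, f', g')"])
qed

lemma sum_card_isos_insert_photon:
  "(\<Sum>j\<in>el_edges G. card (isos (insert_photon G j) (attach_photon C e1 a b w e2))) = card (isos G C)"
proof -
  let ?S = "insertion_isos G (attach_photon C e1 a b w e2)"
  have "contract_iso G e1 ` ?S = isos G C"
    using isos_subset_contract_iso_image contract_iso_in_isos
    by (fastforce simp: insertion_isos_def)
  then have "card ?S = card (isos G C)"
    using inj_on_contract_iso by (metis bij_betw_imageI bij_betw_same_card)
  moreover have "finite (el_edges G)" using wf_graphD(2)[OF G(1)] by (simp add: el_edges_def)
  moreover have "finite (isos (insert_photon G j) (attach_photon C e1 a b w e2))"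
    if "j \<in> el_edges G" for j
    using insert_photon_eq_attach_photon[OF G(1)] that
      wf_graphD(1,2)[OF G(1)] wf_graphD(1,2)[OF C(2)]
    by (intro finite_isos) (simp_all add: attach_photon_simps el_edges_def)
  ultimately show ?thesis by (simp add: insertion_isos_def)
qed

end

section \<open>Summing over isomorphism classes\<close>

lemma rep_iso_class_onePI:
  assumes "wf_graph G" "onePI G"
  shows "onePI (rep (iso_class G))" "loops (rep (iso_class G)) = loops G"
  using graph_iso_onePI_loops[OF rep_iso_class(2)[OF assms(1)] assms(2)] by simp_all

lemma el_classes_rep:
  assumes "c \<in> el_classes L"
  shows "wf_graph (rep c)" "onePI (rep c)" "residue_el (rep c)" "loops (rep c) = int L"
    "iso_class (rep c) = c"
proof -
  obtain G where G: "c = iso_class G" "wf_graph G" "onePI G" "residue_el G" "loops G = int L"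
    using assms by (auto simp: el_classes_def)
  show "wf_graph (rep c)" "iso_class (rep c) = c" using rep_iso_class(1) iso_class_rep G by simp_all
  show "onePI (rep c)" "loops (rep c) = int L" using rep_iso_class_onePI G by simp_all
  show "residue_el (rep c)" using graph_iso_residue(1)[OF rep_iso_class(2)] G by simp
qed

lemma v_classes_rep:
  assumes "d \<in> v_classes L"
  shows "wf_graph (rep d)" "onePI (rep d)" "residue_v (rep d)" "loops (rep d) = int L"
    "iso_class (rep d) = d"
proof -
  obtain G where G: "d = iso_class G" "wf_graph G" "onePI G" "residue_v G" "loops G = int L"
    using assms by (auto simp: v_classes_def)
  show "wf_graph (rep d)" "iso_class (rep d) = d" using rep_iso_class(1) iso_class_rep G by simp_all
  show "onePI (rep d)" "loops (rep d) = int L" using rep_iso_class_onePI G by simp_all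
  show "residue_v (rep d)" using graph_iso_residue(2)[OF rep_iso_class(2)] G by simp
qed

definition photon_insertions :: "nat \<Rightarrow> (fgraph set \<times> nat) set" where
  "photon_insertions L = (SIGMA c:el_classes L. el_edges (rep c))"

definition insertion_class :: "fgraph set \<times> nat \<Rightarrow> fgraph set" where
  "insertion_class x = iso_class (insert_photon (rep (fst x)) (snd x))"

lemma insertion_class_in_v_classes:
  assumes "x \<in> photon_insertions L"
  shows "insertion_class x \<in> v_classes L"
proof -
  obtain c j where x: "x = (c, j)" "c \<in> el_classes L" "j \<in> el_edges (rep c)"
    using assms by (auto simp: photon_insertions_def)
  note c = el_classes_rep[OF x(2)]
  have "connected_graph (rep c)" using c(2) by (simp add: onePI_def)
  then show ?thesis
    using insert_photon_properties[OF c(1,3) x(3)] c(2,4) x(1)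
    by (auto simp: v_classes_def insertion_class_def)
qed

definition iso_insertions :: "fgraph \<Rightarrow> fgraph \<Rightarrow> nat set" where
  "iso_insertions G D = {j\<in>el_edges G. graph_iso (insert_photon G j) D}"

lemma iso_insertions_graph_iso:
  assumes G: "wf_graph G" "residue_el G" and C: "photon_attachment C e1 a b w e2"
    and j: "j \<in> iso_insertions G (attach_photon C e1 a b w e2)"
  shows "graph_iso G C"
proof -
  have j: "j \<in> el_edges G" "graph_iso (insert_photon G j) (attach_photon C e1 a b w e2)"
    using j by (auto simp: iso_insertions_def)
  interpret attachment_pair G j "end1 G j" "end2 G j" "fresh (V G)" "fresh (E G)" C e1 a b w e2
    using attachment_pair_insert_photon[OF G j(1) C] .
  have "insert_photon G j = src.G'" using insert_photon_eq_attach_photon[OF G(1) src.edge_j] .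
  then obtain f g where "graph_morph src.G' tgt.G' f g" using j(2) by (auto simp: graph_iso_def)
  then show ?thesis using morph_restrict graph_iso_def by blast
qed

lemma card_iso_insertions:
  assumes G: "wf_graph G" "residue_el G"
    and C: "photon_attachment C e1 a b w e2" "wf_graph C" "a \<noteq> b" and "graph_iso G C"
  shows "card (iso_insertions G (attach_photon C e1 a b w e2)) * Sym (attach_photon C e1 a b w e2)
    = Sym G"
proof -
  let ?D = "attach_photon C e1 a b w e2"
  have wfD: "wf_graph ?D" using photon_attachment.wf_attach_photon_iff[OF C(1)] C(2) by simp
  have "finite (el_edges G)" using wf_graphD(2)[OF G(1)] by (simp add: el_edges_def)
  then have "card (iso_insertions G ?D) * Sym ?D
      = (\<Sum>j\<in>el_edges G. if graph_iso (insert_photon G j) ?D then Sym ?D else 0)"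
    by (simp add: iso_insertions_def sum.inter_filter[symmetric])
  also have "\<dots> = (\<Sum>j\<in>el_edges G. card (isos (insert_photon G j) ?D))"
    using card_isos_eq_Sym_target[OF insert_photon_properties(1)[OF G] wfD] by simp
  also have "\<dots> = card (isos G C)" using sum_card_isos_insert_photon[OF G C] .
  also have "\<dots> = Sym G" using card_isos_eq_Sym_source[OF G(1) C(2) assms(6)] .
  finally show ?thesis .
qed

lemma iso_class_insert_photon_eq_iff:
  assumes "c \<in> el_classes L" "j \<in> el_edges (rep c)" "d \<in> v_classes L"
  shows "iso_class (insert_photon (rep c) j) = d \<longleftrightarrow> j \<in> iso_insertions (rep c) (rep d)"
proof -
  note c = el_classes_rep[OF assms(1)] and D = v_classes_rep[OF assms(3)]
  have "wf_graph (insert_photon (rep c) j)" using insert_photon_properties(1)[OF c(1,3) assms(2)] .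
  then show ?thesis
    using iso_class_eq_iff[OF _ D(1)] D(5) assms(2) by (simp add: iso_insertions_def)
qed

lemma contract_vertex_class:
  assumes d: "d \<in> v_classes L"
  obtains C e1 a b e2 where "rep d = attach_photon C e1 a b (xv (rep d) 2) e2"
    "photon_attachment C e1 a b (xv (rep d) 2) e2" "a \<noteq> b" "wf_graph C" "iso_class C \<in> el_classes L"
proof -
  note D = v_classes_rep[OF d]
  interpret vertex_graph "rep d" using D by unfold_locales
  obtain C e1 a b e2 where DC: "rep d = attach_photon C e1 a b pv e2"
    and C: "photon_attachment C e1 a b pv e2" and "a \<noteq> b" "residue_el C"
    by (rule contract_photon_vertex)
  interpret C: photon_attachment C e1 a b pv e2 using C .
  have wfC: "wf_graph C" using C.wf_attach_photon_iff D(1) DC by simp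
  have pC: "onePI C" using C.onePI_attach_photon_iff D(2) DC by simp
  then have "loops C = int L" using C.loops_attach_photon D(4) DC by (simp add: onePI_def)
  then have "iso_class C \<in> el_classes L"
    using wfC pC \<open>residue_el C\<close> by (auto simp: el_classes_def)
  then show thesis using that DC C \<open>a \<noteq> b\<close> wfC by blast
qed

lemma insertion_fiber_eq:
  assumes c0: "c0 \<in> el_classes L" and d: "d \<in> v_classes L"
    and uniq: "\<And>c j. c \<in> el_classes L \<Longrightarrow> j \<in> iso_insertions (rep c) (rep d) \<Longrightarrow> c = c0"
  shows "{x\<in>photon_insertions L. insertion_class x = d} = {c0} \<times> iso_insertions (rep c0) (rep d)"
proof (intro set_eqI iffI)
  fix x assume "x \<in> {x\<in>photon_insertions L. insertion_class x = d}"
  then obtain c j where x: "x = (c, j)" "c \<in> el_classes L" "j \<in> el_edges (rep c)"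
    "iso_class (insert_photon (rep c) j) = d"
    by (auto simp: photon_insertions_def insertion_class_def)
  then have "j \<in> iso_insertions (rep c) (rep d)"
    using iso_class_insert_photon_eq_iff[OF x(2,3) d] by simp
  then show "x \<in> {c0} \<times> iso_insertions (rep c0) (rep d)"
    using uniq[OF x(2)] x(1) by auto
next
  fix x assume "x \<in> {c0} \<times> iso_insertions (rep c0) (rep d)"
  then obtain j where x: "x = (c0, j)" "j \<in> iso_insertions (rep c0) (rep d)"
    by auto
  then have "j \<in> el_edges (rep c0)" by (simp add: iso_insertions_def)
  then show "x \<in> {x\<in>photon_insertions L. insertion_class x = d}"
    using iso_class_insert_photon_eq_iff[OF c0 _ d] x c0
    by (simp add: photon_insertions_def insertion_class_def)
qed

text \<open>The class \<open>c0\<close> is that of the graph obtained by contracting the photon vertex of \<open>d\<close>.\<close>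

lemma insertion_class_fiber:
  assumes d: "d \<in> v_classes L"
  obtains c0 where "c0 \<in> el_classes L"
    "{x\<in>photon_insertions L. insertion_class x = d} = {c0} \<times> iso_insertions (rep c0) (rep d)"
    "card (iso_insertions (rep c0) (rep d)) * Sym (rep d) = Sym (rep c0)"
    "iso_insertions (rep c0) (rep d) \<noteq> {}"
proof -
  obtain C e1 a b e2 where DC: "rep d = attach_photon C e1 a b (xv (rep d) 2) e2"
    and C: "photon_attachment C e1 a b (xv (rep d) 2) e2" "a \<noteq> b" "wf_graph C"
    and "iso_class C \<in> el_classes L"
    using contract_vertex_class[OF d] by blast
  define c0 where "c0 = iso_class C"
  have c0: "c0 \<in> el_classes L" using \<open>iso_class C \<in> el_classes L\<close> by (simp add: c0_def)
  note G0 = el_classes_rep[OF c0]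
  have "graph_iso (rep c0) C"
    unfolding c0_def using graph_iso_sym[OF C(3) rep_iso_class(2)[OF C(3)]] .
  then have card: "card (iso_insertions (rep c0) (rep d)) * Sym (rep d) = Sym (rep c0)"
    using card_iso_insertions[OF G0(1,3) C(1,3,2)] DC by simp
  have "card (iso_insertions (rep c0) (rep d)) \<noteq> 0"
    using card Sym_pos[OF G0(1)] by (intro notI) simp
  then have ne: "iso_insertions (rep c0) (rep d) \<noteq> {}" by auto
  have uniq: "c = c0" if c: "c \<in> el_classes L" and j: "j \<in> iso_insertions (rep c) (rep d)"
    for c j
  proof -
    note G = el_classes_rep[OF c]
    have "graph_iso (rep c) C" using iso_insertions_graph_iso[OF G(1,3) C(1)] j DC by simp
    then show ?thesis using iso_class_eq_iff[OF G(1) C(3)] G(5) by (simp add: c0_def)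
  qed
  show thesis using that[OF c0 insertion_fiber_eq[OF c0 d uniq] card ne] .
qed

lemma sum_fiber_weights:
  assumes d: "d \<in> v_classes L"
  shows "(\<Sum>x\<in>{x\<in>photon_insertions L. insertion_class x = d}. 1 / of_nat (Sym (rep (fst x))))
    = (1 / of_nat (Sym (rep d)) :: rat)"
proof -
  obtain c0 where c0: "c0 \<in> el_classes L"
    and fib: "{x\<in>photon_insertions L. insertion_class x = d}
      = {c0} \<times> iso_insertions (rep c0) (rep d)"
    and card: "card (iso_insertions (rep c0) (rep d)) * Sym (rep d) = Sym (rep c0)"
    and "iso_insertions (rep c0) (rep d) \<noteq> {}"
    using d by (rule insertion_class_fiber)
  have "(\<Sum>x\<in>{x\<in>photon_insertions L. insertion_class x = d}. 1 / of_nat (Sym (rep (fst x))))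
      = (\<Sum>x\<in>{c0} \<times> iso_insertions (rep c0) (rep d). 1 / of_nat (Sym (rep c0)) :: rat)"
    unfolding fib by (intro sum.cong) auto
  also have "\<dots> = of_nat (card (iso_insertions (rep c0) (rep d))) / of_nat (Sym (rep c0))"
    by (simp add: card_cartesian_product_singleton)
  also have "\<dots> = 1 / of_nat (Sym (rep d))"
    using card Sym_pos[OF v_classes_rep(1)[OF d]] Sym_pos[OF el_classes_rep(1)[OF c0]]
    by (simp add: field_simps flip: of_nat_mult)
  finally show ?thesis .
qed

lemma v_classes_subset_insertion_classes: "v_classes L \<subseteq> insertion_class ` photon_insertions L"
proof
  fix d assume d: "d \<in> v_classes L"
  obtain c0 where "c0 \<in> el_classes L"
    and fib: "{x\<in>photon_insertions L. insertion_class x = d}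
      = {c0} \<times> iso_insertions (rep c0) (rep d)"
    and "card (iso_insertions (rep c0) (rep d)) * Sym (rep d) = Sym (rep c0)"
    and "iso_insertions (rep c0) (rep d) \<noteq> {}"
    using d by (rule insertion_class_fiber)
  then obtain j where "j \<in> iso_insertions (rep c0) (rep d)" by blast
  then have "(c0, j) \<in> {x\<in>photon_insertions L. insertion_class x = d}" unfolding fib by simp
  then show "d \<in> insertion_class ` photon_insertions L" by (intro image_eqI[of _ _ "(c0, j)"]) auto
qed

text \<open>Both index sets are in fact finite, but as a sum over an infinite set is \<open>0\<close> it suffices
  to know that they are finite or infinite together.\<close>

lemma infinite_v_classes:
  assumes "infinite (el_classes L)"
  shows "infinite (v_classes L)"
proof -
  define \<phi> where "\<phi> c = insertion_class (c, SOME j. j \<in> el_edges (rep c))" for c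
  have ins: "(c, SOME j. j \<in> el_edges (rep c)) \<in> photon_insertions L" if "c \<in> el_classes L" for c
    using el_edges_nonempty[OF el_classes_rep(1-3)[OF that]] that
    by (simp add: photon_insertions_def some_in_eq)
  then have im: "\<phi> ` el_classes L \<subseteq> v_classes L"
    using insertion_class_in_v_classes by (auto simp: \<phi>_def)
  have "inj_on \<phi> (el_classes L)"
  proof (rule inj_onI)
    fix c c' assume c: "c \<in> el_classes L" "c' \<in> el_classes L" and eq: "\<phi> c = \<phi> c'"
    have "\<phi> c \<in> v_classes L" using im c(1) by blast
    then obtain c0 where "c0 \<in> el_classes L"
      and fib: "{x\<in>photon_insertions L. insertion_class x = \<phi> c}
        = {c0} \<times> iso_insertions (rep c0) (rep (\<phi> c))"
      and "card (iso_insertions (rep c0) (rep (\<phi> c))) * Sym (rep (\<phi> c)) = Sym (rep c0)"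
      and "iso_insertions (rep c0) (rep (\<phi> c)) \<noteq> {}"
      by (rule insertion_class_fiber)
    have "(c, SOME j. j \<in> el_edges (rep c)) \<in> {x\<in>photon_insertions L. insertion_class x = \<phi> c}"
      "(c', SOME j. j \<in> el_edges (rep c')) \<in> {x\<in>photon_insertions L. insertion_class x = \<phi> c}"
      using ins c eq by (simp_all add: \<phi>_def)
    then show "c = c'" unfolding fib by simp
  qed
  then have "infinite (\<phi> ` el_classes L)" using assms finite_imageD by blast
  then show ?thesis using im finite_subset by blast
qed

lemma hscale_add: "hscale r (p + q) = hscale r p + hscale r q"
  by (simp add: hscale_def distrib_left)

lemma hscale_sum: "hscale r (\<Sum>i\<in>A. p i) = (\<Sum>i\<in>A. hscale r (p i))"
  by (simp add: hscale_def sum_distrib_left)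

lemma hscale_sum_scalar: "(\<Sum>i\<in>A. hscale (r i) p) = hscale (\<Sum>i\<in>A. r i) p"
proof (induction A rule: infinite_finite_induct)
  case (insert i A)
  then show ?case by (simp add: hscale_def single_add distrib_right)
qed (simp_all add: hscale_def)

lemma sum_insert_photon_classes:
  "(\<Sum>c\<in>el_classes L. hscale (1 / of_nat (Sym (rep c)))
      (\<Sum>i\<in>el_edges (rep c). gen (insert_photon (rep c) i)))
   = (\<Sum>d\<in>v_classes L. hscale (1 / of_nat (Sym (rep d))) (gen (rep d)))"
proof (cases "finite (el_classes L)")
  case False
  then show ?thesis using infinite_v_classes by simp
next
  case True
  define w :: "fgraph set \<Rightarrow> rat" where "w c = 1 / of_nat (Sym (rep c))" for c
  let ?S = "photon_insertions L"
  have finS: "finite ?S"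
    using True wf_graphD(2)[OF el_classes_rep(1)] by (simp add: photon_insertions_def el_edges_def)
  then have finVC: "finite (v_classes L)"
    using v_classes_subset_insertion_classes by (rule finite_surj)
  have "(\<Sum>c\<in>el_classes L. hscale (w c) (\<Sum>i\<in>el_edges (rep c). gen (insert_photon (rep c) i)))
      = (\<Sum>c\<in>el_classes L. \<Sum>i\<in>el_edges (rep c). hscale (w c) (gen (insert_photon (rep c) i)))"
    by (simp add: hscale_sum)
  also have "\<dots> = (\<Sum>x\<in>?S. hscale (w (fst x)) (gen (insert_photon (rep (fst x)) (snd x))))"
    using True wf_graphD(2)[OF el_classes_rep(1)]
    by (simp add: photon_insertions_def sum.Sigma el_edges_def split_beta)
  also have "\<dots> = (\<Sum>x\<in>?S. hscale (w (fst x)) (gen (rep (insertion_class x))))"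
    using gen_rep_iso_class insert_photon_properties(1)[OF el_classes_rep(1,3)]
    by (intro sum.cong) (auto simp: photon_insertions_def insertion_class_def)
  also have "\<dots> = (\<Sum>d\<in>v_classes L. \<Sum>x\<in>{x\<in>?S. insertion_class x = d}.
      hscale (w (fst x)) (gen (rep (insertion_class x))))"
    using insertion_class_in_v_classes by (intro sum.group[OF finS finVC, symmetric]) blast
  also have "\<dots> = (\<Sum>d\<in>v_classes L. hscale (w d) (gen (rep d)))"
  proof (rule sum.cong[OF refl])
    fix d assume d: "d \<in> v_classes L"
    have "(\<Sum>x\<in>{x\<in>?S. insertion_class x = d}. hscale (w (fst x)) (gen (rep (insertion_class x))))
        = (\<Sum>x\<in>{x\<in>?S. insertion_class x = d}. hscale (w (fst x)) (gen (rep d)))"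
      by (rule sum.cong) auto
    also have "\<dots> = hscale (\<Sum>x\<in>{x\<in>?S. insertion_class x = d}. w (fst x)) (gen (rep d))"
      by (rule hscale_sum_scalar)
    also have "\<dots> = hscale (w d) (gen (rep d))" using sum_fiber_weights[OF d] by (simp add: w_def)
    finally show "(\<Sum>x\<in>{x\<in>?S. insertion_class x = d}.
        hscale (w (fst x)) (gen (rep (insertion_class x)))) = hscale (w d) (gen (rep d))" .
  qed
  finally show ?thesis unfolding w_def .
qed

theorem mainTheorem7:
  fixes L :: nat
  assumes "L \<ge> 1"
  shows "W_L L = (\<Sum>c\<in>el_classes L. hscale (1 / of_nat (Sym (rep c))) (WT (rep c)))
    \<and> (\<Sum>c\<in>el_classes L. hscale (1 / of_nat (Sym (rep c)))
          (\<Sum>i\<in>el_edges (rep c). gen (insert_photon (rep c) i)))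
      = (\<Sum>c\<in>v_classes L. hscale (1 / of_nat (Sym (rep c))) (gen (rep c)))"
  \<comment> \<open>the identity holds for every \<open>L\<close>\<close>
proof
  show vertex: "(\<Sum>c\<in>el_classes L. hscale (1 / of_nat (Sym (rep c)))
          (\<Sum>i\<in>el_edges (rep c). gen (insert_photon (rep c) i)))
      = (\<Sum>c\<in>v_classes L. hscale (1 / of_nat (Sym (rep c))) (gen (rep c)))"
    by (rule sum_insert_photon_classes)
  show "W_L L = (\<Sum>c\<in>el_classes L. hscale (1 / of_nat (Sym (rep c))) (WT (rep c)))"
    unfolding W_L_def WT_def hscale_add sum.distrib vertex ..
qed

end
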